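(* Let $\pi$ be a probability density on $\mathbb{R}^d$ with $\pi(x)>0$ for all $x$ and $\log\pi\in C^1(\mathbb{R}^d)$, and assume: (i) $\pi(x)=\pi_1(x_1)\pi_{2:d}(x_2,\dots,x_d)$ for some densities $\pi_1$ on $\mathbb{R}$ and $\pi_{2:d}$ on $\mathbb{R}^{d-1}$; (ii) for some $q\in[0,1)$, $\left|\frac{d}{dx_1}\log\pi_1(x_1)\right|=\Theta(|x_1|^q)$ as $|x_1|\to\infty$. For $\lambda>0$ let $\pi^{(\lambda)}(x):=\lambda^{-1}\pi(x_1/\lambda,x_2,\dots,x_d)$, fix $\sigma>0$, and let $P^M_\lambda$ be the Metropolis--Hastings kernel with target $\pi^{(\lambda)}$ and MALA candidate kernel $Q^M_\lambda(x,\cdot)=N\big(x+\frac{\sigma^2}{2}\nabla\log\pi^{(\lambda)}(x),\sigma^2\mathbb{I}_d\big)$. Then there is $\gamma>0$ such that $\mathrm{Gap}(P^M_\lambda)\le\Theta\big(e^{-\gamma\lambda^{-(1+q)}+q\log\lambda}\big)$ as $\lambda\downarrow0$, i.e. $\limsup_{\lambda\downarrow0}\mathrm{Gap}(P^M_\lambda)\,e^{\gamma\lambda^{-(1+q)}-q\log\lambda}<\infty$.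
   Context: Metropolis--Hastings kernel with target density $\pi$ and candidate kernel $Q(x,dy)=q(x,y)dy$: $P(x,dy)=\alpha(x,y)Q(x,dy)+r(x)\delta_x(dy)$ with $\alpha(x,y)=\min\{1,\pi(y)q(y,x)/(\pi(x)q(x,y))\}$ and $r(x)=1-\int\alpha(x,y)Q(x,dy)$. $\mathrm{Gap}(P)=\inf_{f\in L^2_{0,1}(\pi)}\frac12\int (f(y)-f(x))^2\pi(dx)P(x,dy)$ with $L^2_{0,1}(\pi)=\{f:\mathbb{E}_\pi f=0,\mathrm{Var}_\pi f=1\}$. $F=\Theta(G)$ as $|x_1|\to\infty$ means $\liminf F/G>0$ and $\limsup F/G<\infty$. *)

theory Defs
  imports "HOL-Analysis.Analysis"
begin

definition grad :: "(real^'n \<Rightarrow> real) \<Rightarrow> real^'n \<Rightarrow> real^'n" where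
  "grad f x = (\<chi> i. frechet_derivative f (at x) (axis i 1))"

definition gauss_dens :: "real \<Rightarrow> real^'n \<Rightarrow> real^'n \<Rightarrow> real" where
  "gauss_dens \<sigma> m y =
     (2 * pi * \<sigma>\<^sup>2) powr (- real CARD('n) / 2) * exp (- (norm (y - m))\<^sup>2 / (2 * \<sigma>\<^sup>2))"

definition mala_q :: "real \<Rightarrow> (real^'n \<Rightarrow> real) \<Rightarrow> real^'n \<Rightarrow> real^'n \<Rightarrow> real" where
  "mala_q \<sigma> p x y = gauss_dens \<sigma> (x + (\<sigma>\<^sup>2 / 2) *\<^sub>R grad (\<lambda>z. ln (p z)) x) y"

definition mh_accept :: "('a \<Rightarrow> real) \<Rightarrow> ('a \<Rightarrow> 'a \<Rightarrow> real) \<Rightarrow> 'a \<Rightarrow> 'a \<Rightarrow> real" where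
  "mh_accept p q x y = min 1 (p y * q y x / (p x * q x y))"

definition mh_rej :: "('a::euclidean_space \<Rightarrow> real) \<Rightarrow> ('a \<Rightarrow> 'a \<Rightarrow> real) \<Rightarrow> 'a \<Rightarrow> ennreal" where
  "mh_rej p q x = 1 - (\<integral>\<^sup>+ y. ennreal (mh_accept p q x y * q x y) \<partial>lborel)"

(* integral of a nonnegative g against the MH kernel P(x,dy) = alpha(x,y) q(x,y) dy + r(x) delta_x(dy) *)
definition mh_kernel_int ::
  "('a::euclidean_space \<Rightarrow> real) \<Rightarrow> ('a \<Rightarrow> 'a \<Rightarrow> real) \<Rightarrow> 'a \<Rightarrow> ('a \<Rightarrow> real) \<Rightarrow> ennreal" where
  "mh_kernel_int p q x g =
     (\<integral>\<^sup>+ y. ennreal (mh_accept p q x y * q x y * g y) \<partial>lborel) + mh_rej p q x * ennreal (g x)"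

definition L2_01 :: "('a::euclidean_space \<Rightarrow> real) \<Rightarrow> ('a \<Rightarrow> real) set" where
  "L2_01 p = {f. f \<in> borel_measurable lborel
              \<and> integrable lborel (\<lambda>x. p x * f x)
              \<and> integrable lborel (\<lambda>x. p x * (f x)\<^sup>2)
              \<and> (\<integral>x. p x * f x \<partial>lborel) = 0
              \<and> (\<integral>x. p x * (f x - (\<integral>z. p z * f z \<partial>lborel))\<^sup>2 \<partial>lborel) = 1}"

definition mh_gap :: "('a::euclidean_space \<Rightarrow> real) \<Rightarrow> ('a \<Rightarrow> 'a \<Rightarrow> real) \<Rightarrow> ennreal" where
  "mh_gap p q = (INF f \<in> L2_01 p.
     ennreal (1/2) * (\<integral>\<^sup>+ x. ennreal (p x) * mh_kernel_int p q x (\<lambda>y. (f y - f x)\<^sup>2) \<partial>lborel))"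

(* pi^(lambda)(x) = lambda^{-1} pi(x_1/lambda, x_2, ..., x_d), first coordinate = index i1 *)
definition pi_scaled :: "'n \<Rightarrow> real \<Rightarrow> (real^'n \<Rightarrow> real) \<Rightarrow> real^'n \<Rightarrow> real" where
  "pi_scaled i1 l p x = p (\<chi> i. if i = i1 then x $ i / l else x $ i) / l"

end

(*
  For a set B with 0 < \<pi>(B) \<le> 1/2, the standardized indicator of B is a test function
  in L2_01, so Gap(P) \<le> 2 A whenever the probability flow min(\<pi>(x) q(x,y), \<pi>(y) q(y,x))
  out of every x \<in> B integrates to at most A \<pi>(x).  Take for B the box 1 \<le> x\<^sub>1 \<le> 2,
  0 \<le> x\<^sub>i \<le> 2.

  Since \<pi>\<^sub>1 is integrable and |(log \<pi>\<^sub>1)'| \<ge> c\<^sub>1 > 0 on its tails, (log \<pi>\<^sub>1)' \<le> -c\<^sub>1 on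
  the right tail and \<ge> c\<^sub>1 on the left tail.  For small \<lambda> the MALA proposal from B under
  \<pi>\<^sup>(\<lambda>) is therefore centred at x\<^sub>1 \<le> 2 - K with K = \<sigma>\<^sup>2 c\<^sub>1 / (2 \<lambda>).  A proposal y with
  y\<^sub>1 \<ge> 2 - K/2 costs a Gaussian factor e^(-K\<^sup>2/(16 \<sigma>\<^sup>2)); one with y\<^sub>1 < 2 - K/2 lies in
  the left tail, where \<pi>\<^sup>(\<lambda>)(y) \<le> e^(-c\<^sub>1 K/(4 \<lambda>)) \<pi>\<^sup>(\<lambda>)(y + K/4 e\<^sub>1).  Both are
  e^(-a/\<lambda>\<^sup>2), while the upper bound |(log \<pi>\<^sub>1)'| = O(|t|\<^sup>q) only gives the lower bound
  \<pi>\<^sup>(\<lambda>) \<ge> e^(-O(\<lambda>^(-(1+q)))) on B.  As q < 1, Gap \<le> e^(-a/\<lambda>\<^sup>2 + O(\<lambda>^(-(1+q)))), and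
  \<gamma> = 1 already works.
*)
theory Submission
  imports Defs "HOL-Probability.Distributions"
begin

section \<open>Coordinate updates and Lebesgue measure\<close>

definition vec_upd :: "'a^'n \<Rightarrow> 'n \<Rightarrow> 'a \<Rightarrow> 'a^'n" where
  "vec_upd x k t = (\<chi> i. if i = k then t else x $ i)"

lemma vec_upd_nth [simp]: "vec_upd x k t $ i = (if i = k then t else x $ i)"
  by (simp add: vec_upd_def)

lemma vec_upd_eq_add_axis: "vec_upd x k t = vec_upd x k 0 + t *\<^sub>R axis k (1::real)"
  by (simp add: vec_eq_iff axis_def)

lemma norm_vec_upd_zero_le: "norm (vec_upd x k 0) \<le> norm (x::real^'n)"
  by (rule norm_le_componentwise_cart) simp

lemma emeasure_lborel_atLeast: "emeasure lborel {a::real..} = \<infinity>"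
proof -
  have "of_nat n \<le> emeasure lborel {a::real..}" for n
    using emeasure_mono[of "{a..a + real n}" "{a..}" lborel]
    by (simp add: ennreal_of_nat_eq_real_of_nat)
  then have "(SUP n. of_nat n :: ennreal) \<le> emeasure lborel {a..}"
    by (rule SUP_least)
  then show ?thesis
    by (simp add: ennreal_SUP_of_nat_eq_top top_unique)
qed

lemma nn_integral_lborel_translate:
  fixes g :: "'a::euclidean_space \<Rightarrow> ennreal"
  assumes "g \<in> borel_measurable borel"
  shows "(\<integral>\<^sup>+y. g (y + a) \<partial>lborel) = (\<integral>\<^sup>+y. g y \<partial>lborel)"
proof -
  have "(\<integral>\<^sup>+y. g y \<partial>lborel) = (\<integral>\<^sup>+y. g y \<partial>distr lborel borel ((+) a))"
    by (simp add: lborel_distr_plus)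
  also have "\<dots> = (\<integral>\<^sup>+y. g (y + a) \<partial>lborel)"
    using assms by (simp add: nn_integral_distr add.commute)
  finally show ?thesis ..
qed

lemma nn_integral_lborel_stretch_coordinate:
  fixes g :: "real^'n \<Rightarrow> ennreal"
  assumes g: "g \<in> borel_measurable borel" and c: "c \<noteq> 0"
  shows "(\<integral>\<^sup>+x. g x \<partial>lborel) = ennreal \<bar>c\<bar> * (\<integral>\<^sup>+x. g (vec_upd x k (c * x $ k)) \<partial>lborel)"
proof -
  define a where "a j = (if j = axis k 1 then c else 1)" for j :: "real^'n"
  define S where "S x = (0::real^'n) + (\<Sum>j\<in>Basis. (a j * (x \<bullet> j)) *\<^sub>R j)" for x
  have S: "S x = vec_upd x k (c * x $ k)" for x
  proof -
    have "S x = (\<chi> i. a (axis i 1) * (x \<bullet> axis i 1))"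
      using vector_cart[of "\<lambda>j. a j * (x \<bullet> j)"] by (simp add: S_def)
    then have "S x = (\<chi> i. if i = k then c * x $ i else x $ i)"
      by (simp add: a_def axis_eq_axis inner_axis fun_eq_iff)
    then show ?thesis
      by (simp add: vec_eq_iff)
  qed
  have prod_a: "(\<Prod>j\<in>(Basis::(real^'n) set). \<bar>a j\<bar>) = \<bar>c\<bar>"
    by (simp add: a_def if_distrib[of abs] prod.delta' cong: if_cong)
  have "lborel = density (distr lborel borel S) (\<lambda>_. \<bar>c\<bar>)"
    unfolding S_def[abs_def] prod_a[symmetric] using c
    by (intro lborel_affine_euclidean) (simp add: a_def)
  then have "(\<integral>\<^sup>+x. g x \<partial>lborel) = (\<integral>\<^sup>+x. g x \<partial>density (distr lborel borel S) (\<lambda>_. \<bar>c\<bar>))"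
    by simp
  also have "\<dots> = ennreal \<bar>c\<bar> * (\<integral>\<^sup>+x. g (S x) \<partial>lborel)"
    using g by (simp add: S_def[abs_def] nn_integral_density nn_integral_distr nn_integral_cmult)
  finally show ?thesis by (simp add: S)
qed

section \<open>Gaussian densities\<close>

lemma gauss_dens_pos: "0 < \<sigma> \<Longrightarrow> 0 < gauss_dens \<sigma> m y"
  by (simp add: gauss_dens_def)

lemma gauss_dens_nonneg [simp]: "0 \<le> gauss_dens \<sigma> m y"
  by (simp add: gauss_dens_def)

lemma gauss_dens_le: "gauss_dens \<sigma> m y \<le> (2 * pi * \<sigma>\<^sup>2) powr (- real CARD('n) / 2)"
  for y :: "real^'n"
  unfolding gauss_dens_def by (rule mult_left_le) auto

lemma borel_measurable_gauss_dens [measurable]: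
  "(\<lambda>y. gauss_dens \<sigma> m (y::real^'n)) \<in> borel_measurable borel"
  unfolding gauss_dens_def by measurable

lemma gauss_dens_eq_prod_normal_density:
  assumes "0 < \<sigma>"
  shows "gauss_dens \<sigma> m (y::real^'n) = (\<Prod>b\<in>Basis. normal_density (m \<bullet> b) \<sigma> (y \<bullet> b))"
proof -
  have "(\<Prod>b\<in>(Basis::(real^'n) set). 1 / sqrt (2 * pi * \<sigma>\<^sup>2))
      = (2 * pi * \<sigma>\<^sup>2) powr (- real CARD('n) / 2)"
  proof -
    have var_pos: "0 < 2 * pi * \<sigma>\<^sup>2"
      using assms by simp
    have "1 / sqrt (2 * pi * \<sigma>\<^sup>2) = (2 * pi * \<sigma>\<^sup>2) powr (- 1 / 2)"
      using var_pos by (simp add: powr_minus_divide powr_half_sqrt)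
    then have "(\<Prod>b\<in>(Basis::(real^'n) set). 1 / sqrt (2 * pi * \<sigma>\<^sup>2))
        = ((2 * pi * \<sigma>\<^sup>2) powr (- 1 / 2)) ^ CARD('n)"
      by simp
    also have "\<dots> = (2 * pi * \<sigma>\<^sup>2) powr (- real CARD('n) / 2)"
      using var_pos by (subst powr_power) auto
    finally show ?thesis .
  qed
  moreover have "(\<Prod>b\<in>(Basis::(real^'n) set). exp (- ((y - m) \<bullet> b)\<^sup>2 / (2 * \<sigma>\<^sup>2)))
      = exp (- (norm (y - m))\<^sup>2 / (2 * \<sigma>\<^sup>2))"
  proof -
    have "(\<Sum>b\<in>(Basis::(real^'n) set). (y - m) \<bullet> b * ((y - m) \<bullet> b)) = (norm (y - m))\<^sup>2"
      by (simp only: power2_norm_eq_inner euclidean_inner[of "y - m" "y - m"])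
    then have "(\<Sum>b\<in>(Basis::(real^'n) set). - ((y - m) \<bullet> b)\<^sup>2 / (2 * \<sigma>\<^sup>2))
        = - (norm (y - m))\<^sup>2 / (2 * \<sigma>\<^sup>2)"
      by (simp add: sum_negf sum_divide_distrib[symmetric] power2_eq_square)
    then show ?thesis
      by (simp add: exp_sum[symmetric])
  qed
  moreover have "(\<Prod>b\<in>Basis. normal_density (m \<bullet> b) \<sigma> (y \<bullet> b))
      = (\<Prod>b\<in>(Basis::(real^'n) set). 1 / sqrt (2 * pi * \<sigma>\<^sup>2))
        * (\<Prod>b\<in>(Basis::(real^'n) set). exp (- ((y - m) \<bullet> b)\<^sup>2 / (2 * \<sigma>\<^sup>2)))"
    by (simp only: normal_density_def inner_diff_left[symmetric] prod.distrib)
  ultimately show ?thesis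
    by (simp add: gauss_dens_def)
qed

lemma nn_integral_gauss_dens:
  assumes "0 < \<sigma>"
  shows "(\<integral>\<^sup>+y. gauss_dens \<sigma> m (y::real^'n) \<partial>lborel) = 1"
proof -
  have normal: "(\<integral>\<^sup>+t. normal_density \<mu> \<sigma> t \<partial>lborel) = 1" for \<mu>
    using assms by (subst nn_integral_eq_integral) auto
  have "(\<integral>\<^sup>+y. gauss_dens \<sigma> m (y::real^'n) \<partial>lborel)
      = (\<integral>\<^sup>+y. (\<Prod>b\<in>Basis. ennreal (normal_density (m \<bullet> b) \<sigma> (y \<bullet> b))) \<partial>lborel)"
    using assms by (simp add: gauss_dens_eq_prod_normal_density prod_ennreal)
  also have "\<dots> = (\<Prod>b\<in>(Basis::(real^'n) set). \<integral>\<^sup>+t. normal_density (m \<bullet> b) \<sigma> t \<partial>lborel)"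
    by (rule nn_integral_lborel_prod) auto
  finally show ?thesis
    by (simp add: normal)
qed

lemma gauss_dens_split:
  assumes "0 < \<sigma>"
  shows "gauss_dens \<sigma> m (y::real^'n)
    = 2 powr (real CARD('n) / 2) * exp (- (norm (y - m))\<^sup>2 / (4 * \<sigma>\<^sup>2)) * gauss_dens (sqrt 2 * \<sigma>) m y"
proof -
  define d where "d = real CARD('n) / 2"
  define c where "c = (2 * pi * \<sigma>\<^sup>2) powr (- d)"
  define e where "e = exp (- (norm (y - m))\<^sup>2 / (4 * \<sigma>\<^sup>2))"
  have "gauss_dens \<sigma> m y = c * exp (- (norm (y - m))\<^sup>2 / (2 * \<sigma>\<^sup>2))"
    by (simp add: gauss_dens_def c_def d_def)
  also have "exp (- (norm (y - m))\<^sup>2 / (2 * \<sigma>\<^sup>2)) = e * e"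
    by (simp add: e_def exp_add[symmetric])
  finally have lhs: "gauss_dens \<sigma> m y = c * (e * e)" .
  have "(sqrt 2 * \<sigma>)\<^sup>2 = 2 * \<sigma>\<^sup>2"
    by (simp add: power_mult_distrib)
  then have "gauss_dens (sqrt 2 * \<sigma>) m y = (2 * (2 * pi * \<sigma>\<^sup>2)) powr (- d) * e"
    by (simp add: gauss_dens_def d_def e_def mult_ac)
  also have "(2 * (2 * pi * \<sigma>\<^sup>2)) powr (- d) = 2 powr (- d) * c"
    unfolding c_def by (rule powr_mult)
  finally have rhs: "gauss_dens (sqrt 2 * \<sigma>) m y = 2 powr (- d) * c * e" .
  have "2 powr d * 2 powr (- d) = (1::real)"
    by (simp add: powr_add[symmetric])
  then show ?thesis
    unfolding lhs rhs d_def[symmetric] e_def[symmetric] by (simp add: mult_ac)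
qed

section \<open>A conductance bound for the spectral gap\<close>

lemma standardized_indicator_in_L2_01:
  fixes p :: "'a::euclidean_space \<Rightarrow> real"
  assumes p_pos: "\<And>x. 0 < p x" and p_meas: "p \<in> borel_measurable lborel"
    and p_dens: "(\<integral>\<^sup>+x. p x \<partial>lborel) = 1"
    and B: "B \<in> sets borel" and P: "P = (\<integral>x. p x * indicator B x \<partial>lborel)" "0 < P" "P < 1"
  shows "(\<lambda>x. (indicator B x - P) / sqrt (P * (1 - P))) \<in> L2_01 p"
proof -
  define s where "s = sqrt (P * (1 - P))"
  have s: "0 < s" "s\<^sup>2 = P * (1 - P)"
    using P by (auto simp: s_def)
  have p_int: "integrable lborel p"
    using p_meas p_dens p_pos by (intro integrableI_nonneg) (auto simp: less_imp_le)
  have p_total: "(\<integral>x. p x \<partial>lborel) = 1"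
    using p_meas p_dens p_pos by (simp add: integral_eq_nn_integral less_imp_le)
  have pB_int: "integrable lborel (\<lambda>x. p x * indicator B x)"
    using B p_int by (simp add: integrable_real_mult_indicator)
  let ?f = "\<lambda>x. (indicator B x - P) / s"
  have f_integrand: "p x * ?f x = (p x * indicator B x - P * p x) / s" for x
    by (simp add: field_simps)
  have f2_integrand: "p x * (?f x)\<^sup>2 = ((1 - 2 * P) * (p x * indicator B x) + P\<^sup>2 * p x) / s\<^sup>2" for x
    by (cases "x \<in> B") (simp_all add: power_divide power2_eq_square algebra_simps)
  have mean: "(\<integral>x. p x * ?f x \<partial>lborel) = 0"
    unfolding f_integrand using p_int pB_int by (simp add: P(1)[symmetric] p_total)
  have "(\<integral>x. p x * (?f x)\<^sup>2 \<partial>lborel) = ((1 - 2 * P) * P + P\<^sup>2) / s\<^sup>2"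
    unfolding f2_integrand using p_int pB_int by (simp add: P(1)[symmetric] p_total)
  also have "\<dots> = 1"
    using s P by (simp add: power2_eq_square field_simps)
  finally have var: "(\<integral>x. p x * (?f x)\<^sup>2 \<partial>lborel) = 1" .
  have "?f \<in> borel_measurable lborel"
    using B by measurable
  moreover have "integrable lborel (\<lambda>x. p x * ?f x)" "integrable lborel (\<lambda>x. p x * (?f x)\<^sup>2)"
    unfolding f_integrand f2_integrand using p_int pB_int
    by (intro integrable_divide_zero integrable_diff integrable_add integrable_mult_right; simp)+
  ultimately show ?thesis
    using var unfolding L2_01_def mem_Collect_eq s_def[symmetric] mean diff_zero by blast
qed

lemma mh_flow_eq_min:
  assumes "0 < p x" "0 < Q x y"
  shows "p x * (mh_accept p Q x y * Q x y) = min (p x * Q x y) (p y * Q y x)"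
  using assms by (simp add: mh_accept_def min_def field_simps)

lemma mh_dirichlet_integrand_eq:
  fixes p :: "'a::euclidean_space \<Rightarrow> real"
  assumes p_pos: "\<And>x. 0 < p x" and Q_pos: "\<And>x y. 0 < Q x y"
    and [measurable]: "p \<in> borel_measurable lborel" "f \<in> borel_measurable lborel"
      "(\<lambda>y. Q x y) \<in> borel_measurable lborel" "(\<lambda>y. Q y x) \<in> borel_measurable lborel"
  shows "ennreal (p x) * mh_kernel_int p Q x (\<lambda>y. (f y - f x)\<^sup>2)
    = (\<integral>\<^sup>+y. ennreal (min (p x * Q x y) (p y * Q y x) * (f y - f x)\<^sup>2) \<partial>lborel)"
proof -
  have "(\<lambda>y. ennreal (mh_accept p Q x y * Q x y * (f y - f x)\<^sup>2)) \<in> borel_measurable lborel"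
    unfolding mh_accept_def by measurable
  then have "ennreal (p x) * mh_kernel_int p Q x (\<lambda>y. (f y - f x)\<^sup>2)
      = (\<integral>\<^sup>+y. ennreal (p x * (mh_accept p Q x y * Q x y) * (f y - f x)\<^sup>2) \<partial>lborel)"
    using p_pos[of x]
    by (simp add: mh_kernel_int_def nn_integral_cmult[symmetric] ennreal_mult'[symmetric] mult.assoc)
  moreover have "p x * (mh_accept p Q x y * Q x y) = min (p x * Q x y) (p y * Q y x)" for y
    using p_pos Q_pos by (rule mh_flow_eq_min)
  ultimately show ?thesis
    by simp
qed

lemma nn_integral_symmetric_indicator:
  fixes M :: "'a::euclidean_space \<Rightarrow> 'a \<Rightarrow> real"
  assumes M_meas [measurable]: "(\<lambda>z. M (fst z) (snd z)) \<in> borel_measurable (lborel \<Otimes>\<^sub>M lborel)"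
    and M_sym: "\<And>x y. M x y = M y x" and M_nonneg: "\<And>x y. 0 \<le> M x y"
    and [measurable]: "B \<in> sets lborel"
  shows "(\<integral>\<^sup>+x. \<integral>\<^sup>+y. ennreal (M x y * (indicator B x + indicator B y)) \<partial>lborel \<partial>lborel)
    = 2 * (\<integral>\<^sup>+x. \<integral>\<^sup>+y. ennreal (M x y * indicator B x) \<partial>lborel \<partial>lborel)"
proof -
  define F where "F x y = ennreal (M x y * indicator B x)" for x y
  have [measurable]: "(\<lambda>z. M (snd z) (fst z)) \<in> borel_measurable (lborel \<Otimes>\<^sub>M lborel)"
    using M_sym M_meas by simp
  have [measurable]: "(\<lambda>y. M x y) \<in> borel_measurable lborel" "(\<lambda>y. M y x) \<in> borel_measurable lborel" for x
    using measurable_compose[OF measurable_Pair1' M_meas] measurable_compose[OF measurable_Pair2' M_meas]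
    by auto
  have [measurable]: "(\<lambda>z. F (fst z) (snd z)) \<in> borel_measurable (lborel \<Otimes>\<^sub>M lborel)"
    "(\<lambda>z. F (snd z) (fst z)) \<in> borel_measurable (lborel \<Otimes>\<^sub>M lborel)"
    unfolding F_def by measurable
  have "(\<lambda>y. F x y) \<in> borel_measurable lborel" "(\<lambda>y. F y x) \<in> borel_measurable lborel" for x
    unfolding F_def by measurable
  moreover have "(\<lambda>x. \<integral>\<^sup>+y. F x y \<partial>lborel) \<in> borel_measurable lborel"
    "(\<lambda>x. \<integral>\<^sup>+y. F y x \<partial>lborel) \<in> borel_measurable lborel"
    by measurable
  moreover have "ennreal (M x y * (indicator B x + indicator B y)) = F x y + F y x" for x y
    using M_nonneg[of x y] by (simp add: F_def M_sym[of y x] distrib_left ennreal_plus)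
  ultimately have "(\<integral>\<^sup>+x. \<integral>\<^sup>+y. ennreal (M x y * (indicator B x + indicator B y)) \<partial>lborel \<partial>lborel)
      = (\<integral>\<^sup>+x. \<integral>\<^sup>+y. F x y \<partial>lborel \<partial>lborel) + (\<integral>\<^sup>+x. \<integral>\<^sup>+y. F y x \<partial>lborel \<partial>lborel)"
    by (simp add: nn_integral_add)
  also have "(\<integral>\<^sup>+x. \<integral>\<^sup>+y. F y x \<partial>lborel \<partial>lborel) = (\<integral>\<^sup>+x. \<integral>\<^sup>+y. F x y \<partial>lborel \<partial>lborel)"
    using lborel_pair.Fubini'[of F] by (simp add: case_prod_beta')
  finally show ?thesis
    by (simp add: F_def mult_2)
qed

lemma mh_energy_standardized_indicator_le:
  fixes p :: "'a::euclidean_space \<Rightarrow> real" and Q :: "'a \<Rightarrow> 'a \<Rightarrow> real" and P s :: real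
  assumes p_pos: "\<And>x. 0 < p x" and p_meas [measurable]: "p \<in> borel_measurable lborel"
    and Q_pos: "\<And>x y. 0 < Q x y"
    and Q_meas [measurable]: "(\<lambda>z. Q (fst z) (snd z)) \<in> borel_measurable (lborel \<Otimes>\<^sub>M lborel)"
    and B [measurable]: "B \<in> sets lborel"
  defines "f \<equiv> \<lambda>x. (indicator B x - P) / s"
  shows "(\<integral>\<^sup>+x. ennreal (p x) * mh_kernel_int p Q x (\<lambda>y. (f y - f x)\<^sup>2) \<partial>lborel)
    \<le> ennreal (2 / s\<^sup>2) * (\<integral>\<^sup>+x. \<integral>\<^sup>+y. ennreal (min (p x * Q x y) (p y * Q y x) * indicator B x) \<partial>lborel \<partial>lborel)"
proof -
  define M where "M x y = min (p x * Q x y) (p y * Q y x)" for x y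
  have M_nonneg: "0 \<le> M x y" for x y
    using p_pos Q_pos by (simp add: M_def less_imp_le)
  have f_meas: "f \<in> borel_measurable lborel"
    unfolding f_def by measurable
  have Q_sections [measurable]: "(\<lambda>y. Q x y) \<in> borel_measurable lborel" "(\<lambda>y. Q y x) \<in> borel_measurable lborel" for x
    using measurable_compose[OF measurable_Pair1' Q_meas] measurable_compose[OF measurable_Pair2' Q_meas]
    by auto
  have [measurable]: "(\<lambda>z. Q (snd z) (fst z)) \<in> borel_measurable (lborel \<Otimes>\<^sub>M lborel)"
    using measurable_compose[OF measurable_pair_swap' Q_meas] by (simp add: case_prod_beta)
  have M_meas [measurable]: "(\<lambda>z. M (fst z) (snd z)) \<in> borel_measurable (lborel \<Otimes>\<^sub>M lborel)"
    unfolding M_def by measurable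
  have [measurable]: "(\<lambda>y. M x y) \<in> borel_measurable lborel" for x
    unfolding M_def by measurable
  have "(\<integral>\<^sup>+x. ennreal (p x) * mh_kernel_int p Q x (\<lambda>y. (f y - f x)\<^sup>2) \<partial>lborel)
      = (\<integral>\<^sup>+x. \<integral>\<^sup>+y. ennreal (M x y * (f y - f x)\<^sup>2) \<partial>lborel \<partial>lborel)"
    unfolding M_def by (simp add: mh_dirichlet_integrand_eq[OF p_pos Q_pos p_meas f_meas Q_sections])
  also have "\<dots> \<le> (\<integral>\<^sup>+x. \<integral>\<^sup>+y.
      ennreal (1 / s\<^sup>2) * ennreal (M x y * (indicator B x + indicator B y)) \<partial>lborel \<partial>lborel)"
  proof (intro nn_integral_mono)
    fix x y
    have "(f y - f x)\<^sup>2 = (indicator B y - indicator B x)\<^sup>2 / s\<^sup>2"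
      by (simp add: f_def diff_divide_distrib[symmetric] power_divide)
    also have "\<dots> \<le> (indicator B x + indicator B y) / s\<^sup>2"
      by (intro divide_right_mono) (auto simp: indicator_def)
    finally have "M x y * (f y - f x)\<^sup>2 \<le> M x y * ((indicator B x + indicator B y) / s\<^sup>2)"
      using M_nonneg[of x y] by (rule mult_left_mono)
    then show "ennreal (M x y * (f y - f x)\<^sup>2)
        \<le> ennreal (1 / s\<^sup>2) * ennreal (M x y * (indicator B x + indicator B y))"
      using M_nonneg[of x y] by (simp add: ennreal_mult[symmetric] ennreal_leI)
  qed
  also have "\<dots> = ennreal (1 / s\<^sup>2) * (2 * (\<integral>\<^sup>+x. \<integral>\<^sup>+y. ennreal (M x y * indicator B x) \<partial>lborel \<partial>lborel))"
    using nn_integral_symmetric_indicator[OF M_meas _ M_nonneg B]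
    by (simp add: nn_integral_cmult M_def min.commute)
  also have "\<dots> = ennreal (2 / s\<^sup>2) * (\<integral>\<^sup>+x. \<integral>\<^sup>+y. ennreal (M x y * indicator B x) \<partial>lborel \<partial>lborel)"
  proof -
    have "ennreal (1 / s\<^sup>2) * 2 = ennreal (1 / s\<^sup>2 * 2)"
      by (subst ennreal_mult) auto
    then show ?thesis
      by (simp add: mult.assoc[symmetric])
  qed
  finally show ?thesis
    by (simp add: M_def)
qed

lemma mh_gap_le_conductance:
  fixes p :: "'a::euclidean_space \<Rightarrow> real" and Q :: "'a \<Rightarrow> 'a \<Rightarrow> real"
  assumes p_pos: "\<And>x. 0 < p x" and p_meas: "p \<in> borel_measurable lborel"
    and p_dens: "(\<integral>\<^sup>+x. p x \<partial>lborel) = 1"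
    and Q_pos: "\<And>x y. 0 < Q x y"
    and Q_meas: "(\<lambda>z. Q (fst z) (snd z)) \<in> borel_measurable (lborel \<Otimes>\<^sub>M lborel)"
    and B: "B \<in> sets borel" and P: "P = (\<integral>x. p x * indicator B x \<partial>lborel)" "0 < P" "P \<le> 1/2"
    and A: "0 \<le> A"
    and flow: "\<And>x. x \<in> B \<Longrightarrow> (\<integral>\<^sup>+y. min (p x * Q x y) (p y * Q y x) \<partial>lborel) \<le> p x * A"
  shows "mh_gap p Q \<le> 2 * A"
proof -
  define s where "s = sqrt (P * (1 - P))"
  define f where "f x = (indicator B x - P) / s" for x
  have s: "0 < s" "s\<^sup>2 = P * (1 - P)"
    using P by (auto simp: s_def)
  have "(\<integral>\<^sup>+x. \<integral>\<^sup>+y. ennreal (min (p x * Q x y) (p y * Q y x) * indicator B x) \<partial>lborel \<partial>lborel)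
      \<le> (\<integral>\<^sup>+x. ennreal (A * (p x * indicator B x)) \<partial>lborel)"
    using flow by (intro nn_integral_mono) (auto simp: indicator_def mult.commute)
  also have "\<dots> = ennreal (A * P)"
    using A p_pos p_meas p_dens B
    by (subst nn_integral_eq_integral)
       (auto intro!: integrable_real_mult_indicator integrableI_nonneg simp: P(1) less_imp_le)
  finally have flow_out: "(\<integral>\<^sup>+x. \<integral>\<^sup>+y. ennreal (min (p x * Q x y) (p y * Q y x) * indicator B x) \<partial>lborel \<partial>lborel)
      \<le> ennreal (A * P)" .
  have "f \<in> L2_01 p"
    unfolding f_def[abs_def] s_def
    using P by (intro standardized_indicator_in_L2_01[OF p_pos p_meas p_dens B P(1)]) auto
  then have "mh_gap p Q
      \<le> ennreal (1/2) * (\<integral>\<^sup>+x. ennreal (p x) * mh_kernel_int p Q x (\<lambda>y. (f y - f x)\<^sup>2) \<partial>lborel)"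
    unfolding mh_gap_def by (rule INF_lower)
  also have "\<dots> \<le> ennreal (1/2) * (ennreal (2 / s\<^sup>2) *
      (\<integral>\<^sup>+x. \<integral>\<^sup>+y. ennreal (min (p x * Q x y) (p y * Q y x) * indicator B x) \<partial>lborel \<partial>lborel))"
    using mh_energy_standardized_indicator_le[OF p_pos p_meas Q_pos Q_meas, of B P s] B
    by (intro mult_left_mono) (auto simp: f_def[abs_def])
  also have "\<dots> \<le> ennreal (1/2) * (ennreal (2 / s\<^sup>2) * ennreal (A * P))"
    using flow_out by (intro mult_left_mono) auto
  also have "ennreal (1/2) * (ennreal (2 / s\<^sup>2) * ennreal (A * P)) = ennreal (A / (1 - P))"
  proof -
    have "1/2 * (2 / s\<^sup>2 * (A * P)) = A / (1 - P)"
      unfolding s(2) using P(2,3) by (simp add: field_simps)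
    then show ?thesis
      using A P(2) by (simp add: ennreal_mult[symmetric] del: ennreal_half)
  qed
  also have "\<dots> \<le> ennreal (2 * A)"
    using A P(2,3) by (intro ennreal_leI) (simp add: field_simps mult_left_le)
  finally show ?thesis .
qed

section \<open>Tails of a one-dimensional log-density\<close>

lemma le_exp_mult_of_ln_diff_le:
  fixes a b C :: real
  assumes "0 < a" "0 < b" "ln a - ln b \<le> C"
  shows "a \<le> exp C * b"
proof -
  have "exp (ln a) \<le> exp (C + ln b)"
    using assms(3) by simp
  then show ?thesis
    using assms(1,2) by (simp add: exp_add)
qed

lemma DERIV_diff_le:
  fixes g g' :: "real \<Rightarrow> real"
  assumes "a \<le> b" and deriv: "\<And>t. (g has_real_derivative g' t) (at t)"
    and bound: "\<And>t. a < t \<Longrightarrow> t < b \<Longrightarrow> g' t \<le> C"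
  shows "g b - g a \<le> C * (b - a)"
proof (cases "a = b")
  case False
  with \<open>a \<le> b\<close> have "a < b"
    by simp
  then obtain z where "a < z" "z < b" "g b - g a = (b - a) * g' z"
    using MVT2[of a b g g'] deriv by blast
  moreover have "(b - a) * g' z \<le> (b - a) * C"
    using bound \<open>a < z\<close> \<open>z < b\<close> \<open>a < b\<close> by (intro mult_left_mono) auto
  ultimately show ?thesis
    by (simp add: mult.commute)
qed simp

lemma DERIV_diff_ge:
  fixes g g' :: "real \<Rightarrow> real"
  assumes "a \<le> b" and deriv: "\<And>t. (g has_real_derivative g' t) (at t)"
    and bound: "\<And>t. a < t \<Longrightarrow> t < b \<Longrightarrow> C \<le> g' t"
  shows "C * (b - a) \<le> g b - g a"
proof -
  have "- g b - - g a \<le> - C * (b - a)"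
    by (rule DERIV_diff_le[OF \<open>a \<le> b\<close> DERIV_minus[OF deriv]]) (use bound in auto)
  then show ?thesis
    by simp
qed

text \<open>If the log-derivative of an integrable positive density stayed positive on a right
  tail, the density would be bounded below there and could not be integrable.\<close>
lemma log_derivative_le_at_top:
  fixes f h :: "real \<Rightarrow> real"
  assumes f_pos: "\<And>t. 0 < f t" and f_int: "(\<integral>\<^sup>+t. f t \<partial>lborel) < \<infinity>"
    and deriv: "\<And>t. ((\<lambda>s. ln (f s)) has_real_derivative h t) (at t)"
    and cont: "continuous_on {T..} h"
    and bound: "\<And>t. T \<le> t \<Longrightarrow> c \<le> \<bar>h t\<bar>" and "0 < c"
    and "T \<le> t"
  shows "h t \<le> - c"
proof -
  have h_neg: "h s < 0" if s: "T \<le> s" for s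
  proof (rule ccontr)
    assume "\<not> h s < 0"
    have "0 < h u" if "T \<le> u" for u
    proof (rule ccontr)
      assume "\<not> 0 < h u"
      have "connected (h ` {T..})"
        using cont by (rule connected_continuous_image) simp
      then have "0 \<in> h ` {T..}"
        using s \<open>T \<le> u\<close> \<open>\<not> h s < 0\<close> \<open>\<not> 0 < h u\<close>
        unfolding connected_iff_interval by (meson atLeast_iff image_eqI not_less)
      then show False
        using bound \<open>0 < c\<close> by force
    qed
    then have "ln (f T) \<le> ln (f u)" if "T \<le> u" for u
      using DERIV_diff_ge[OF that deriv, of 0] by (auto simp: less_imp_le)
    then have "f T \<le> f u" if "T \<le> u" for u
      using that f_pos by simp
    then have "(\<integral>\<^sup>+u. ennreal (f T) * indicator {T..} u \<partial>lborel) \<le> (\<integral>\<^sup>+u. f u \<partial>lborel)"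
      by (intro nn_integral_mono) (simp add: indicator_def ennreal_leI)
    moreover have "(\<integral>\<^sup>+u. ennreal (f T) * indicator {T..} u \<partial>lborel) = \<infinity>"
      using f_pos[of T] by (simp add: nn_integral_cmult_indicator emeasure_lborel_atLeast ennreal_mult_top)
    ultimately show False
      using f_int by (simp add: top_unique)
  qed
  show ?thesis
    using h_neg[OF \<open>T \<le> t\<close>] bound[OF \<open>T \<le> t\<close>] by simp
qed

lemma log_derivative_ge_at_bot:
  fixes f h :: "real \<Rightarrow> real"
  assumes f_pos: "\<And>t. 0 < f t" and f_meas: "f \<in> borel_measurable borel"
    and f_int: "(\<integral>\<^sup>+t. f t \<partial>lborel) < \<infinity>"
    and deriv: "\<And>t. ((\<lambda>s. ln (f s)) has_real_derivative h t) (at t)"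
    and cont: "continuous_on {..- T} h"
    and bound: "\<And>t. t \<le> - T \<Longrightarrow> c \<le> \<bar>h t\<bar>" and "0 < c"
    and "t \<le> - T"
  shows "c \<le> h t"
proof -
  have "(\<integral>\<^sup>+s. f (- s) \<partial>lborel) = (\<integral>\<^sup>+s. f s \<partial>lborel)"
    using nn_integral_real_affine[of "\<lambda>s. ennreal (f s)" "-1" 0] f_meas by simp
  moreover have "((\<lambda>s. ln (f (- s))) has_real_derivative - h (- s)) (at s)" for s
    using DERIV_chain2[OF deriv DERIV_minus[OF DERIV_ident]] by simp
  moreover have "continuous_on {T..} (\<lambda>s. - h (- s))"
    by (intro continuous_intros continuous_on_compose2[OF cont]) auto
  ultimately have "- h (- (- t)) \<le> - c"
    using f_pos f_int bound \<open>0 < c\<close> \<open>t \<le> - T\<close>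
    by (intro log_derivative_le_at_top[where f = "\<lambda>s. f (- s)" and h = "\<lambda>s. - h (- s)" and T = T])
       auto
  then show ?thesis
    by simp
qed

lemma Theta_powr_bounds_at_infinity:
  fixes g :: "real \<Rightarrow> real"
  assumes "0 \<le> q"
    and lo: "Liminf at_infinity (\<lambda>t. ereal (\<bar>g t\<bar> / \<bar>t\<bar> powr q)) > 0"
    and hi: "Limsup at_infinity (\<lambda>t. ereal (\<bar>g t\<bar> / \<bar>t\<bar> powr q)) < \<infinity>"
  obtains T c1 c2 where "1 \<le> T" "0 < c1"
    "\<And>t. T \<le> \<bar>t\<bar> \<Longrightarrow> c1 \<le> \<bar>g t\<bar>" "\<And>t. T \<le> \<bar>t\<bar> \<Longrightarrow> \<bar>g t\<bar> \<le> c2 * \<bar>t\<bar> powr q"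
proof -
  obtain c1 where c1: "0 < ereal c1" "ereal c1 < Liminf at_infinity (\<lambda>t. ereal (\<bar>g t\<bar> / \<bar>t\<bar> powr q))"
    using ereal_dense2[OF lo] by blast
  obtain c2 where c2: "Limsup at_infinity (\<lambda>t. ereal (\<bar>g t\<bar> / \<bar>t\<bar> powr q)) < ereal c2"
    using ereal_dense2[OF hi] by blast
  have "eventually (\<lambda>t. c1 < \<bar>g t\<bar> / \<bar>t\<bar> powr q \<and> \<bar>g t\<bar> / \<bar>t\<bar> powr q < c2) at_infinity"
    using less_LiminfD[OF c1(2)] Limsup_lessD[OF c2] by eventually_elim simp
  then obtain b where b: "\<And>t. b \<le> norm t \<Longrightarrow> c1 < \<bar>g t\<bar> / \<bar>t\<bar> powr q \<and> \<bar>g t\<bar> / \<bar>t\<bar> powr q < c2"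
    unfolding eventually_at_infinity by blast
  show thesis
  proof
    show "1 \<le> max b 1" "0 < c1"
      using c1 by auto
    fix t :: real
    assume t: "max b 1 \<le> \<bar>t\<bar>"
    then have "1 \<le> \<bar>t\<bar> powr q" and pos: "0 < \<bar>t\<bar> powr q"
      using \<open>0 \<le> q\<close> by (auto simp: ge_one_powr_ge_zero)
    moreover have "c1 < \<bar>g t\<bar> / \<bar>t\<bar> powr q" "\<bar>g t\<bar> / \<bar>t\<bar> powr q < c2"
      using b[of t] t by auto
    ultimately have "c1 * 1 \<le> c1 * \<bar>t\<bar> powr q" "c1 * \<bar>t\<bar> powr q < \<bar>g t\<bar>"
      "\<bar>g t\<bar> < c2 * \<bar>t\<bar> powr q"
      using \<open>0 < c1\<close> pos by (simp_all add: pos_less_divide_eq pos_divide_less_eq mult.commute)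
    then show "c1 \<le> \<bar>g t\<bar>" "\<bar>g t\<bar> \<le> c2 * \<bar>t\<bar> powr q"
      by simp_all
  qed
qed

lemma eventually_exponent_nonpos_at_right_0:
  fixes a b q :: real
  assumes "0 < a" "q < 1"
  shows "eventually (\<lambda>l. - a / l\<^sup>2 + b * l powr (- (1 + q)) + 1 / l \<le> 0) (at_right 0)"
proof -
  have "((\<lambda>l. b * l powr (1 - q) + l) \<longlongrightarrow> b * 0 + 0) (at_right 0)"
    using \<open>q < 1\<close> eventually_at_right_less[of "0::real"]
    by (intro tendsto_intros tendsto_zero_powrI) (auto elim: eventually_mono)
  then have "eventually (\<lambda>l. b * l powr (1 - q) + l < a) (at_right 0)"
    by (rule order_tendstoD(2)) (use \<open>0 < a\<close> in simp)
  then show ?thesis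
    using eventually_at_right_less[of 0]
  proof eventually_elim
    case (elim l)
    have "l powr (- (1 + q)) = l powr ((1 - q) - 2)"
      by simp
    also have "\<dots> = l powr (1 - q) / l powr 2"
      by (rule powr_diff)
    also have "l powr 2 = l\<^sup>2"
      using elim(2) by (simp add: powr_numeral)
    finally have "l powr (- (1 + q)) = l powr (1 - q) / l\<^sup>2" .
    then have "- a / l\<^sup>2 + b * l powr (- (1 + q)) + 1 / l = (b * l powr (1 - q) + l - a) / l\<^sup>2"
      using elim(2) by (simp add: field_simps power2_eq_square)
    also have "\<dots> \<le> 0"
      using elim(1) by (intro divide_nonpos_nonneg) auto
    finally show ?case .
  qed
qed

section \<open>The product target and its rescaling\<close>

locale product_density =
  fixes \<pi> :: "real^'n \<Rightarrow> real" and \<pi>1 :: "real \<Rightarrow> real" and \<pi>2 :: "real^'n \<Rightarrow> real"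
    and i1 :: 'n
  assumes pos: "\<And>x. 0 < \<pi> x"
    and meas: "\<pi> \<in> borel_measurable lborel"
    and dens: "(\<integral>\<^sup>+x. \<pi> x \<partial>lborel) = 1"
    and C1_diff: "\<And>x. (\<lambda>z. ln (\<pi> z)) differentiable (at x)"
    and C1_cont: "continuous_on UNIV (grad (\<lambda>z. ln (\<pi> z)))"
    and prod: "\<And>x. \<pi> x = \<pi>1 (x $ i1) * \<pi>2 x"
    and \<pi>2_indep: "\<And>x t. \<pi>2 (vec_upd x i1 t) = \<pi>2 x"
    and \<pi>1_nonneg: "\<And>t. 0 \<le> \<pi>1 t"
    and \<pi>1_meas: "\<pi>1 \<in> borel_measurable lborel"
    and \<pi>1_dens: "(\<integral>\<^sup>+t. \<pi>1 t \<partial>lborel) = 1"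
    and \<pi>2_nonneg: "\<And>x. 0 \<le> \<pi>2 x"
begin

abbreviation target :: "real \<Rightarrow> real^'n \<Rightarrow> real" where
  "target l \<equiv> pi_scaled i1 l \<pi>"

definition score1 :: "real \<Rightarrow> real" where
  "score1 t = deriv (\<lambda>s. ln (\<pi>1 s)) t"

lemma \<pi>_vec_upd: "\<pi> (vec_upd x i1 t) = \<pi>1 t * \<pi>2 x"
  using prod[of "vec_upd x i1 t"] by (simp add: \<pi>2_indep)

lemma \<pi>1_pos: "0 < \<pi>1 t" and \<pi>2_pos: "0 < \<pi>2 x"
proof -
  have "0 < \<pi>1 t * \<pi>2 x"
    using pos[of "vec_upd x i1 t"] by (simp add: \<pi>_vec_upd)
  then show "0 < \<pi>1 t" "0 < \<pi>2 x"
    using \<pi>1_nonneg[of t] \<pi>2_nonneg[of x] by (simp_all add: zero_less_mult_iff)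
qed

lemma has_real_derivative_ln_\<pi>1:
  "((\<lambda>s. ln (\<pi>1 s)) has_real_derivative grad (\<lambda>z. ln (\<pi> z)) (vec_upd x i1 t) $ i1) (at t)"
proof -
  let ?D = "frechet_derivative (\<lambda>z. ln (\<pi> z)) (at (vec_upd x i1 t))"
  have D: "((\<lambda>z. ln (\<pi> z)) has_derivative ?D) (at (vec_upd x i1 t))"
    using C1_diff frechet_derivative_works by blast
  have "((\<lambda>s. vec_upd x i1 s) has_derivative (\<lambda>s. s *\<^sub>R axis i1 1)) (at t)"
    by (subst vec_upd_eq_add_axis) (auto intro!: derivative_eq_intros)
  from diff_chain_at[OF this D]
  have chain: "((\<lambda>s. ln (\<pi> (vec_upd x i1 s)) - ln (\<pi>2 x)) has_derivative (\<lambda>s. ?D (s *\<^sub>R axis i1 1) - 0)) (at t)"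
    by (intro has_derivative_diff has_derivative_const) (simp add: o_def)
  have "ln (\<pi> (vec_upd x i1 s)) - ln (\<pi>2 x) = ln (\<pi>1 s)" for s
    using \<pi>_vec_upd[of x s] \<pi>1_pos[of s] \<pi>2_pos[of x] by (simp add: ln_mult)
  then have "(\<lambda>s. ln (\<pi> (vec_upd x i1 s)) - ln (\<pi>2 x)) = (\<lambda>s. ln (\<pi>1 s))"
    by simp
  moreover have "(\<lambda>s. ?D (s *\<^sub>R axis i1 1) - 0) = (*) (grad (\<lambda>z. ln (\<pi> z)) (vec_upd x i1 t) $ i1)"
    using linear_cmul[OF has_derivative_linear[OF D]] by (simp add: grad_def fun_eq_iff mult.commute)
  ultimately show ?thesis
    using chain by (simp only: has_field_derivative_def)
qed

lemma score1_eq_grad: "score1 t = grad (\<lambda>z. ln (\<pi> z)) (vec_upd x i1 t) $ i1"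
  unfolding score1_def using has_real_derivative_ln_\<pi>1 by (rule DERIV_imp_deriv)

lemma has_real_derivative_score1: "((\<lambda>s. ln (\<pi>1 s)) has_real_derivative score1 t) (at t)"
  using has_real_derivative_ln_\<pi>1[of 0 t] by (simp add: score1_eq_grad[of t 0])

lemma continuous_on_score1: "continuous_on A score1"
proof -
  have "continuous_on UNIV (\<lambda>t. grad (\<lambda>z. ln (\<pi> z)) (vec_upd 0 i1 t) $ i1)"
    by (subst vec_upd_eq_add_axis)
       (auto intro!: continuous_intros continuous_on_compose2[OF C1_cont])
  moreover have "score1 = (\<lambda>t. grad (\<lambda>z. ln (\<pi> z)) (vec_upd 0 i1 t) $ i1)"
    by (simp add: fun_eq_iff score1_eq_grad[of _ 0])
  ultimately show ?thesis
    using continuous_on_subset by auto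
qed

lemma continuous_on_\<pi>: "continuous_on A \<pi>"
proof -
  have "continuous_on A (\<lambda>z. exp (ln (\<pi> z)))"
    using C1_diff by (intro continuous_on_exp differentiable_imp_continuous_on)
      (simp add: differentiable_at_imp_differentiable_on)
  then show ?thesis
    using pos by simp
qed

lemma \<pi>2_bounded_below:
  assumes "bounded S"
  obtains m where "0 < m" "\<And>x. x \<in> S \<Longrightarrow> m \<le> \<pi>2 x"
proof -
  obtain r where r: "\<And>x. x \<in> S \<Longrightarrow> norm x \<le> r"
    using assms by (auto simp: bounded_iff)
  obtain z where "z \<in> cball 0 (max r 0)" and z: "\<And>y. y \<in> cball 0 (max r 0) \<Longrightarrow> \<pi> z \<le> \<pi> y"
    using continuous_attains_inf[of "cball 0 (max r 0)" \<pi>] continuous_on_\<pi> by fastforce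
  show thesis
  proof
    show "0 < \<pi> z / \<pi>1 0"
      using pos \<pi>1_pos by simp
    fix x
    assume "x \<in> S"
    then have "vec_upd x i1 0 \<in> cball 0 (max r 0)"
      using r norm_vec_upd_zero_le[of x i1] by (fastforce simp: dist_norm)
    then have "\<pi> z \<le> \<pi>1 0 * \<pi>2 x"
      using z \<pi>_vec_upd by metis
    then show "\<pi> z / \<pi>1 0 \<le> \<pi>2 x"
      using \<pi>1_pos[of 0] by (simp add: divide_le_eq mult.commute)
  qed
qed

lemma pi_scaled_eq_\<pi>: "target l x = \<pi> (vec_upd x i1 (x $ i1 / l)) / l"
proof -
  have "(\<chi> i. if i = i1 then x $ i / l else x $ i) = vec_upd x i1 (x $ i1 / l)"
    by (simp add: vec_eq_iff)
  then show ?thesis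
    by (simp add: pi_scaled_def)
qed

lemma pi_scaled_eq: "target l x = \<pi>1 (x $ i1 / l) * \<pi>2 x / l"
  by (simp add: pi_scaled_eq_\<pi> \<pi>_vec_upd)

lemma pi_scaled_pos: "0 < l \<Longrightarrow> 0 < target l x"
  using pos by (simp add: pi_scaled_eq_\<pi>)

lemma bounded_linear_stretch: "bounded_linear (\<lambda>x::real^'n. vec_upd x i1 (x $ i1 / l))"
proof -
  have "linear (\<lambda>x. vec_upd x i1 (x $ i1 / l))"
    by (rule linearI) (auto simp: vec_eq_iff add_divide_distrib)
  then show ?thesis
    by (simp add: linear_conv_bounded_linear)
qed

lemma borel_measurable_stretch [measurable]:
  "(\<lambda>x::real^'n. vec_upd x i1 (x $ i1 / l)) \<in> borel_measurable borel"
  using bounded_linear_stretch by (intro borel_measurable_continuous_onI linear_continuous_on)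

lemma borel_measurable_\<pi> [measurable]: "\<pi> \<in> borel_measurable borel"
  using meas by simp

lemma borel_measurable_pi_scaled [measurable]: "target l \<in> borel_measurable borel"
  unfolding pi_scaled_eq_\<pi>[abs_def] by measurable

lemma nn_integral_pi_scaled:
  assumes "0 < l"
  shows "(\<integral>\<^sup>+x. target l x \<partial>lborel) = 1"
proof -
  have "(\<integral>\<^sup>+x. \<pi> x \<partial>lborel) = ennreal (1 / l) * (\<integral>\<^sup>+x. \<pi> (vec_upd x i1 (x $ i1 / l)) \<partial>lborel)"
    using assms nn_integral_lborel_stretch_coordinate[of "\<lambda>x. ennreal (\<pi> x)" "1 / l" i1] by simp
  also have "\<dots> = (\<integral>\<^sup>+x. target l x \<partial>lborel)"
    using assms by (subst nn_integral_cmult[symmetric])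
       (auto simp: pi_scaled_eq_\<pi> ennreal_mult'[symmetric] intro!: nn_integral_cong)
  finally show ?thesis
    using dens by simp
qed

lemma pi_scaled_translate_axis:
  "target l (y + a *\<^sub>R axis i1 1) = \<pi>1 ((y $ i1 + a) / l) * \<pi>2 y / l"
proof -
  have "y + a *\<^sub>R axis i1 1 = vec_upd y i1 (y $ i1 + a)"
    by (simp add: vec_eq_iff axis_def)
  then show ?thesis
    by (simp add: pi_scaled_eq \<pi>2_indep)
qed

lemma nn_integral_pi_scaled_translate:
  assumes "0 < l"
  shows "(\<integral>\<^sup>+y. target l (y + a) \<partial>lborel) = 1"
  using nn_integral_lborel_translate[of "\<lambda>y. ennreal (target l y)" a] nn_integral_pi_scaled[OF assms]
  by simp

lemma grad_ln_pi_scaled: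
  assumes "0 < l"
  shows "grad (\<lambda>z. ln (target l z)) x
    = (\<chi> i. (if i = i1 then 1 / l else 1) * grad (\<lambda>z. ln (\<pi> z)) (vec_upd x i1 (x $ i1 / l)) $ i)"
proof -
  let ?S = "\<lambda>x. vec_upd x i1 (x $ i1 / l)"
  let ?D = "frechet_derivative (\<lambda>z. ln (\<pi> z)) (at (?S x))"
  have D: "((\<lambda>z. ln (\<pi> z)) has_derivative ?D) (at (?S x))"
    using C1_diff frechet_derivative_works by blast
  have "((\<lambda>z. ln (\<pi> (?S z))) has_derivative (\<lambda>v. ?D (?S v))) (at x)"
    using diff_chain_at[OF bounded_linear_imp_has_derivative[OF bounded_linear_stretch] D]
    by (simp add: o_def)
  then have "((\<lambda>z. ln (\<pi> (?S z)) - ln l) has_derivative (\<lambda>v. ?D (?S v) - 0)) (at x)"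
    by (rule has_derivative_diff) (rule has_derivative_const)
  moreover have "ln (\<pi> (?S z)) - ln l = ln (target l z)" for z
    using pos[of "?S z"] assms by (simp add: pi_scaled_eq_\<pi> ln_div)
  ultimately have fd: "frechet_derivative (\<lambda>z. ln (target l z)) (at x) = (\<lambda>v. ?D (?S v))"
    by (intro frechet_derivative_at[symmetric]) simp
  have "grad (\<lambda>z. ln (target l z)) x $ i
      = (if i = i1 then 1 / l else 1) * grad (\<lambda>z. ln (\<pi> z)) (?S x) $ i" for i
  proof -
    have "?S (axis i 1) = (if i = i1 then 1 / l else 1) *\<^sub>R axis i 1"
      by (auto simp: vec_eq_iff axis_def)
    then have "grad (\<lambda>z. ln (target l z)) x $ i = ?D ((if i = i1 then 1 / l else 1) *\<^sub>R axis i 1)"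
      by (simp only: grad_def vec_lambda_beta fd)
    also have "\<dots> = (if i = i1 then 1 / l else 1) * ?D (axis i 1)"
      by (simp add: linear_cmul[OF has_derivative_linear[OF D]])
    finally show ?thesis
      by (simp add: grad_def)
  qed
  then show ?thesis
    by (simp add: vec_eq_iff)
qed

lemma grad_ln_pi_scaled_nth_i1:
  assumes "0 < l"
  shows "grad (\<lambda>z. ln (target l z)) x $ i1 = score1 (x $ i1 / l) / l"
  using assms by (simp add: grad_ln_pi_scaled score1_eq_grad[of _ x])

lemma continuous_on_grad_ln_pi_scaled:
  assumes "0 < l"
  shows "continuous_on UNIV (grad (\<lambda>z. ln (target l z)))"
  unfolding grad_ln_pi_scaled[OF assms, abs_def]
  using bounded_linear_stretch
  by (intro continuous_intros continuous_on_compose2[OF C1_cont] linear_continuous_on) auto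

lemma continuous_on_mala_q:
  assumes "0 < l" "0 < \<sigma>"
  shows "continuous_on UNIV (\<lambda>z. mala_q \<sigma> (target l) (fst z) (snd z))"
proof -
  have "continuous_on UNIV (\<lambda>z::(real^'n) \<times> (real^'n). grad (\<lambda>w. ln (target l w)) (fst z))"
    using continuous_on_compose2[OF continuous_on_grad_ln_pi_scaled[OF assms(1)] continuous_on_fst[OF continuous_on_id]]
    by simp
  then show ?thesis
    unfolding mala_q_def gauss_dens_def by (intro continuous_intros) (use assms in auto)
qed

definition probe_box :: "(real^'n) set" where
  "probe_box = cbox (axis i1 1) (\<chi> i. 2)"

lemma probe_box_nth_i1: "x \<in> probe_box \<Longrightarrow> 1 \<le> x $ i1 \<and> x $ i1 \<le> 2"
  by (auto simp: probe_box_def mem_box_cart dest: spec[of _ i1])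

lemma bounded_probe_box: "bounded probe_box"
  by (simp add: probe_box_def)

lemma probe_box_sets: "probe_box \<in> sets borel"
  by (simp add: probe_box_def)

lemma emeasure_probe_box_pos: "0 < emeasure lborel probe_box"
proof -
  have "\<forall>b\<in>Basis. axis i1 1 \<bullet> b \<le> (\<chi> i. (2::real)) \<bullet> b"
    unfolding Basis_vec_def by (auto simp: inner_axis) (simp add: axis_def)
  moreover have "0 < (\<Prod>b\<in>Basis. ((\<chi> i. (2::real)) - axis i1 1) \<bullet> b)"
    unfolding Basis_vec_def by (intro prod_pos) (auto simp: inner_axis, simp add: axis_def)
  ultimately show ?thesis
    by (simp add: probe_box_def emeasure_lborel_cbox_eq)
qed

end

section \<open>Decay of the MALA spectral gap\<close>

locale mala_scaling = product_density \<pi> \<pi>1 \<pi>2 i1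
  for \<pi> :: "real^'n \<Rightarrow> real" and \<pi>1 \<pi>2 and i1 :: 'n +
  fixes q \<sigma> T c1 c2 m :: real
  assumes q: "0 \<le> q" "q < 1" and \<sigma>: "0 < \<sigma>"
    and T: "1 \<le> T" and c1: "0 < c1"
    and score1_lower: "\<And>t. T \<le> \<bar>t\<bar> \<Longrightarrow> c1 \<le> \<bar>score1 t\<bar>"
    and score1_upper: "\<And>t. T \<le> \<bar>t\<bar> \<Longrightarrow> \<bar>score1 t\<bar> \<le> c2 * \<bar>t\<bar> powr q"
    and m: "0 < m" and \<pi>2_lower: "\<And>x. x \<in> probe_box \<Longrightarrow> m \<le> \<pi>2 x"
begin

lemma c2_pos: "0 < c2"
proof -
  have "0 < c2 * \<bar>T\<bar> powr q"
    using c1 score1_lower[of T] score1_upper[of T] T by simp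
  then show ?thesis
    using T by (simp add: zero_less_mult_iff)
qed

lemma score1_le_at_top: "T \<le> t \<Longrightarrow> score1 t \<le> - c1"
  using \<pi>1_pos \<pi>1_dens has_real_derivative_score1 continuous_on_score1 c1 score1_lower
  by (intro log_derivative_le_at_top[of \<pi>1 score1 T c1]) auto

lemma score1_ge_at_bot: "t \<le> - T \<Longrightarrow> c1 \<le> score1 t"
  using \<pi>1_pos \<pi>1_meas \<pi>1_dens has_real_derivative_score1 continuous_on_score1 c1 score1_lower
  by (intro log_derivative_ge_at_bot[of \<pi>1 score1 T c1]) auto

lemma \<pi>1_decay_at_top:
  assumes "T \<le> s" "s \<le> t"
  shows "\<pi>1 t \<le> exp (- c1 * (t - s)) * \<pi>1 s"
proof (rule le_exp_mult_of_ln_diff_le[OF \<pi>1_pos \<pi>1_pos])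
  show "ln (\<pi>1 t) - ln (\<pi>1 s) \<le> - c1 * (t - s)"
    using assms score1_le_at_top by (intro DERIV_diff_le[OF \<open>s \<le> t\<close> has_real_derivative_score1]) auto
qed

lemma \<pi>1_decay_at_bot:
  assumes "s \<le> t" "t \<le> - T"
  shows "\<pi>1 s \<le> exp (- c1 * (t - s)) * \<pi>1 t"
proof (rule le_exp_mult_of_ln_diff_le[OF \<pi>1_pos \<pi>1_pos])
  have "c1 * (t - s) \<le> ln (\<pi>1 t) - ln (\<pi>1 s)"
    using assms score1_ge_at_bot by (intro DERIV_diff_ge[OF \<open>s \<le> t\<close> has_real_derivative_score1]) auto
  then show "ln (\<pi>1 s) - ln (\<pi>1 t) \<le> - c1 * (t - s)"
    by simp
qed

lemma \<pi>1_lower_bound_at_top: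
  assumes "T \<le> t"
  shows "\<pi>1 T * exp (- c2 * t powr (1 + q)) \<le> \<pi>1 t"
proof -
  have "0 < t"
    using assms T by simp
  have "- (c2 * t powr q) \<le> score1 z" if "T < z" "z < t" for z
  proof -
    have "\<bar>score1 z\<bar> \<le> c2 * z powr q"
      using score1_upper[of z] that T by simp
    also have "\<dots> \<le> c2 * t powr q"
      using that T q c2_pos by (intro mult_left_mono powr_mono2) auto
    finally show ?thesis
      by simp
  qed
  then have "- (c2 * t powr q) * (t - T) \<le> ln (\<pi>1 t) - ln (\<pi>1 T)"
    by (intro DERIV_diff_ge[OF assms has_real_derivative_score1])
  moreover have "- (c2 * t powr q) * t \<le> - (c2 * t powr q) * (t - T)"
    using T c2_pos by (intro mult_left_mono_neg) auto
  moreover have "t powr (1 + q) = t powr q * t"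
    using \<open>0 < t\<close> by (simp add: powr_add)
  ultimately have "ln (\<pi>1 T) - ln (\<pi>1 t) \<le> c2 * t powr (1 + q)"
    by (simp add: mult_ac)
  then have "\<pi>1 T \<le> exp (c2 * t powr (1 + q)) * \<pi>1 t"
    by (rule le_exp_mult_of_ln_diff_le[OF \<pi>1_pos \<pi>1_pos])
  then show ?thesis
    by (simp add: exp_minus field_simps)
qed

definition admissible :: "real \<Rightarrow> bool" where
  "admissible l \<longleftrightarrow> 0 < l \<and> l \<le> 1 \<and> 2 * l * T \<le> 1 \<and> 2 * l \<le> c1 \<and> 8 * l * (2 + T) \<le> \<sigma>\<^sup>2 * c1"

lemma eventually_admissible: "eventually admissible (at_right 0)"
proof -
  define \<delta> where "\<delta> = Min {1, 1 / (2 * T), c1 / 2, \<sigma>\<^sup>2 * c1 / (8 * (2 + T))}"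
  have "0 < \<delta>"
    using T c1 \<sigma> by (simp add: \<delta>_def)
  moreover have "admissible l" if "0 < l" "l < \<delta>" for l
    using that T by (simp add: \<delta>_def admissible_def field_simps)
  ultimately show ?thesis
    unfolding eventually_at_right_field by blast
qed

definition density_floor :: "real \<Rightarrow> real" where
  "density_floor l = \<pi>1 T * m * exp (- c2 * (2 / l) powr (1 + q)) / l"

lemma density_floor_pos: "0 < l \<Longrightarrow> 0 < density_floor l"
  using \<pi>1_pos m by (simp add: density_floor_def)

lemma density_floor_le_pi_scaled:
  assumes "0 < l" "l * T \<le> 1" "x \<in> probe_box"
  shows "density_floor l \<le> target l x"
proof -
  let ?t = "x $ i1 / l"
  have "1 / l \<le> ?t" "?t \<le> 2 / l"
    using probe_box_nth_i1[OF assms(3)] assms(1) by (simp_all add: divide_right_mono)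
  moreover have "T \<le> 1 / l"
    using assms by (simp add: field_simps)
  ultimately have "T \<le> ?t" "?t \<le> 2 / l"
    by linarith+
  then have "\<pi>1 T * exp (- c2 * (2 / l) powr (1 + q)) \<le> \<pi>1 T * exp (- c2 * ?t powr (1 + q))"
    using T q c2_pos less_imp_le[OF \<pi>1_pos] by (intro mult_left_mono) (auto intro!: mult_left_mono powr_mono2)
  also have "\<dots> \<le> \<pi>1 ?t"
    using \<open>T \<le> ?t\<close> by (rule \<pi>1_lower_bound_at_top)
  finally have "\<pi>1 T * exp (- c2 * (2 / l) powr (1 + q)) * m \<le> \<pi>1 ?t * \<pi>2 x"
    using \<pi>2_lower[OF assms(3)] m less_imp_le[OF \<pi>1_pos] by (intro mult_mono) auto
  then show ?thesis
    using assms(1) by (simp add: density_floor_def pi_scaled_eq divide_right_mono mult_ac)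
qed

lemma nn_integral_pi_scaled_probe_box:
  assumes "0 < l"
  shows "(\<integral>\<^sup>+x. target l x * indicator probe_box x \<partial>lborel)
    = ennreal (\<integral>x. target l x * indicator probe_box x \<partial>lborel)"
  using assms pi_scaled_pos[of l] nn_integral_pi_scaled[of l] probe_box_sets
  by (intro nn_integral_eq_integral integrable_real_mult_indicator integrableI_nonneg)
     (auto simp: less_imp_le)

lemma probe_box_mass_pos:
  assumes "admissible l"
  shows "0 < (\<integral>x. target l x * indicator probe_box x \<partial>lborel)"
proof -
  have l: "0 < l" "l * T \<le> 1"
    using assms T by (auto simp: admissible_def)
  have "0 < ennreal (density_floor l) * emeasure lborel probe_box"
    using density_floor_pos[OF l(1)] emeasure_probe_box_pos by (simp add: ennreal_zero_less_mult_iff)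
  also have "\<dots> = (\<integral>\<^sup>+x. ennreal (density_floor l) * indicator probe_box x \<partial>lborel)"
    using probe_box_sets by (simp add: nn_integral_cmult_indicator)
  also have "\<dots> \<le> (\<integral>\<^sup>+x. target l x * indicator probe_box x \<partial>lborel)"
    using density_floor_le_pi_scaled[OF l]
    by (intro nn_integral_mono) (auto simp: indicator_def ennreal_leI)
  finally show ?thesis
    by (simp add: nn_integral_pi_scaled_probe_box[OF l(1)])
qed

lemma pi_scaled_probe_box_le_shift:
  assumes "admissible l"
  shows "target l x * indicator probe_box x \<le> exp (- c1 / (2 * l)) * target l (x + (- 1/2) *\<^sub>R axis i1 1)"
proof (cases "x \<in> probe_box")
  case True
  have l: "0 < l" "2 * l * T \<le> 1"
    using assms by (auto simp: admissible_def)
  then have "T \<le> (x $ i1 - 1/2) / l"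
    using probe_box_nth_i1[OF True] by (simp add: field_simps)
  then have "\<pi>1 (x $ i1 / l) \<le> exp (- c1 / (2 * l)) * \<pi>1 ((x $ i1 - 1/2) / l)"
    using \<pi>1_decay_at_top[of "(x $ i1 - 1/2) / l" "x $ i1 / l"] l
    by (simp add: divide_right_mono diff_divide_distrib)
  then have "target l x \<le> exp (- c1 / (2 * l)) * (\<pi>1 ((x $ i1 - 1/2) / l) * \<pi>2 x / l)"
    unfolding pi_scaled_eq[of l x] using l \<pi>2_pos[of x]
    by (simp add: divide_right_mono mult_right_mono mult.assoc[symmetric])
  also have "\<pi>1 ((x $ i1 - 1/2) / l) * \<pi>2 x / l = target l (x + (- 1/2) *\<^sub>R axis i1 1)"
    using pi_scaled_translate_axis[of l x "- 1/2"] by simp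
  finally show ?thesis
    using True by simp
next
  case False
  then show ?thesis
    using assms pi_scaled_pos[of l] by (simp add: admissible_def less_imp_le)
qed

lemma probe_box_mass_le_half:
  assumes "admissible l"
  shows "(\<integral>x. target l x * indicator probe_box x \<partial>lborel) \<le> 1/2"
proof -
  have l: "0 < l" "2 * l \<le> c1"
    using assms by (auto simp: admissible_def)
  have "(\<integral>\<^sup>+x. target l x * indicator probe_box x \<partial>lborel)
      \<le> (\<integral>\<^sup>+x. exp (- c1 / (2 * l)) * target l (x + (- 1/2) *\<^sub>R axis i1 1) \<partial>lborel)"
    by (intro nn_integral_mono ennreal_leI pi_scaled_probe_box_le_shift[OF assms])
  also have "\<dots> = exp (- c1 / (2 * l)) * (\<integral>\<^sup>+x. target l (x + (- 1/2) *\<^sub>R axis i1 1) \<partial>lborel)"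
  proof -
    have "(\<lambda>x. ennreal (target l (x + (- 1/2) *\<^sub>R axis i1 1))) \<in> borel_measurable lborel"
      by measurable
    then show ?thesis
      using pi_scaled_pos[OF l(1)]
      by (simp add: ennreal_mult less_imp_le nn_integral_cmult[symmetric] del: scaleR_minus_left)
  qed
  also have "\<dots> = exp (- c1 / (2 * l))"
    using nn_integral_pi_scaled_translate[OF l(1), of "(- 1/2) *\<^sub>R axis i1 1"] by simp
  finally have "(\<integral>x. target l x * indicator probe_box x \<partial>lborel) \<le> exp (- c1 / (2 * l))"
    by (simp add: nn_integral_pi_scaled_probe_box[OF l(1)] ennreal_le_iff)
  also have "\<dots> \<le> exp (- 1)"
    using l by (simp add: field_simps)
  also have "\<dots> \<le> 1/2"
    using exp_ge_add_one_self[of 1] by (simp add: exp_minus field_simps)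
  finally show ?thesis .
qed
definition drift :: "real \<Rightarrow> real" where
  "drift l = \<sigma>\<^sup>2 * c1 / (2 * l)"

lemma mala_mean_nth_i1:
  assumes "admissible l" "x \<in> probe_box"
  shows "(x + (\<sigma>\<^sup>2 / 2) *\<^sub>R grad (\<lambda>z. ln (target l z)) x) $ i1 \<le> 2 - drift l"
proof -
  have l: "0 < l" "2 * l * T \<le> 1"
    using assms(1) by (auto simp: admissible_def)
  have x: "1 \<le> x $ i1" "x $ i1 \<le> 2"
    using probe_box_nth_i1[OF assms(2)] by auto
  have "T \<le> 1 / l"
    using l T by (simp add: field_simps)
  also have "\<dots> \<le> x $ i1 / l"
    using x l by (simp add: divide_right_mono)
  finally have "score1 (x $ i1 / l) \<le> - c1"
    by (rule score1_le_at_top)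
  then have "\<sigma>\<^sup>2 / 2 * (score1 (x $ i1 / l) / l) \<le> \<sigma>\<^sup>2 / 2 * (- c1 / l)"
    using l by (intro mult_left_mono divide_right_mono) auto
  moreover have "\<sigma>\<^sup>2 / 2 * (- c1 / l) = - drift l"
    by (simp add: drift_def)
  ultimately show ?thesis
    using x by (simp add: grad_ln_pi_scaled_nth_i1[OF l(1)])
qed

lemma mala_q_le_of_far_candidate:
  assumes "admissible l" "x \<in> probe_box" "2 - drift l / 2 \<le> y $ i1"
  defines "\<mu> \<equiv> x + (\<sigma>\<^sup>2 / 2) *\<^sub>R grad (\<lambda>z. ln (target l z)) x"
  shows "mala_q \<sigma> (target l) x y
    \<le> 2 powr (real CARD('n) / 2) * exp (- \<sigma>\<^sup>2 * c1\<^sup>2 / (64 * l\<^sup>2)) * gauss_dens (sqrt 2 * \<sigma>) \<mu> y"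
proof -
  have l: "0 < l"
    using assms(1) by (simp add: admissible_def)
  have "drift l / 2 \<le> y $ i1 - \<mu> $ i1"
    using assms(3) mala_mean_nth_i1[OF assms(1,2)] by (simp add: \<mu>_def)
  also have "\<dots> \<le> norm (y - \<mu>)"
    using component_le_norm_cart[of "y - \<mu>" i1] by simp
  finally have "(drift l / 2)\<^sup>2 \<le> (norm (y - \<mu>))\<^sup>2"
    using l c1 \<sigma> by (intro power_mono) (auto simp: drift_def)
  then have "exp (- (norm (y - \<mu>))\<^sup>2 / (4 * \<sigma>\<^sup>2)) \<le> exp (- \<sigma>\<^sup>2 * c1\<^sup>2 / (64 * l\<^sup>2))"
    using \<sigma> l by (simp add: drift_def divide_right_mono power_divide power_mult_distrib field_simps)
  then show ?thesis
    unfolding mala_q_def \<mu>_def[symmetric] gauss_dens_split[OF \<sigma>, of \<mu> y]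
    by (intro mult_right_mono mult_left_mono) simp_all
qed

lemma pi_scaled_le_at_left_tail:
  assumes "admissible l" "y $ i1 < 2 - drift l / 2"
  shows "target l y \<le> exp (- \<sigma>\<^sup>2 * c1\<^sup>2 / (8 * l\<^sup>2)) * target l (y + (drift l / 4) *\<^sub>R axis i1 1)"
proof -
  let ?s = "y $ i1 / l" and ?s' = "(y $ i1 + drift l / 4) / l"
  have l: "0 < l" "l \<le> 1" "2 + T \<le> drift l / 4"
    using assms(1) by (auto simp: admissible_def drift_def field_simps)
  have "y $ i1 + drift l / 4 \<le> - T"
    using assms(2) l by linarith
  then have "?s' \<le> (- T) / l"
    using l by (intro divide_right_mono) auto
  also have "(- T) / l \<le> - T"
    using l T by (simp add: field_simps mult_left_le)
  finally have "\<pi>1 ?s \<le> exp (- c1 * (?s' - ?s)) * \<pi>1 ?s'"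
    using l c1 \<sigma> by (intro \<pi>1_decay_at_bot) (auto simp: drift_def divide_right_mono)
  moreover have "c1 * (?s' - ?s) = \<sigma>\<^sup>2 * c1\<^sup>2 / (8 * l\<^sup>2)"
    using l by (simp add: drift_def field_simps power2_eq_square)
  ultimately have "\<pi>1 ?s \<le> exp (- \<sigma>\<^sup>2 * c1\<^sup>2 / (8 * l\<^sup>2)) * \<pi>1 ?s'"
    by simp
  then have "target l y \<le> exp (- \<sigma>\<^sup>2 * c1\<^sup>2 / (8 * l\<^sup>2)) * (\<pi>1 ?s' * \<pi>2 y / l)"
    unfolding pi_scaled_eq[of l y] using l \<pi>2_pos[of y]
    by (simp add: divide_right_mono mult_right_mono mult.assoc[symmetric])
  also have "\<pi>1 ?s' * \<pi>2 y / l = target l (y + (drift l / 4) *\<^sub>R axis i1 1)"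
    by (simp add: pi_scaled_translate_axis)
  finally show ?thesis .
qed

lemma min_flow_le:
  assumes "admissible l" "x \<in> probe_box"
  defines "E \<equiv> 2 powr (real CARD('n) / 2) * exp (- \<sigma>\<^sup>2 * c1\<^sup>2 / (64 * l\<^sup>2))"
    and "C \<equiv> (2 * pi * \<sigma>\<^sup>2) powr (- real CARD('n) / 2) * exp (- \<sigma>\<^sup>2 * c1\<^sup>2 / (8 * l\<^sup>2))"
    and "\<mu> \<equiv> x + (\<sigma>\<^sup>2 / 2) *\<^sub>R grad (\<lambda>z. ln (target l z)) x"
    and "a \<equiv> (drift l / 4) *\<^sub>R axis i1 (1::real)"
  shows "min (target l x * mala_q \<sigma> (target l) x y) (target l y * mala_q \<sigma> (target l) y x)
    \<le> target l x * E * gauss_dens (sqrt 2 * \<sigma>) \<mu> y + C * target l (y + a)"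
proof -
  have l: "0 < l"
    using assms(1) by (simp add: admissible_def)
  have px: "0 < target l x"
    by (rule pi_scaled_pos[OF l])
  have p_nonneg: "0 \<le> target l z" for z
    using pi_scaled_pos[OF l] by (rule less_imp_le)
  have E: "0 \<le> E" and C: "0 \<le> C"
    by (simp_all add: E_def C_def)
  show ?thesis
  proof (cases "2 - drift l / 2 \<le> y $ i1")
    case True
    then have "mala_q \<sigma> (target l) x y \<le> E * gauss_dens (sqrt 2 * \<sigma>) \<mu> y"
      unfolding E_def \<mu>_def by (rule mala_q_le_of_far_candidate[OF assms(1,2)])
    then have "target l x * mala_q \<sigma> (target l) x y \<le> target l x * E * gauss_dens (sqrt 2 * \<sigma>) \<mu> y"
      using px by (simp add: mult.assoc)
    then have "min (target l x * mala_q \<sigma> (target l) x y) (target l y * mala_q \<sigma> (target l) y x)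
        \<le> target l x * E * gauss_dens (sqrt 2 * \<sigma>) \<mu> y"
      by (rule min.coboundedI1)
    then show ?thesis
      by (rule add_increasing2[rotated]) (rule mult_nonneg_nonneg[OF C p_nonneg])
  next
    case False
    then have "target l y * mala_q \<sigma> (target l) y x
        \<le> (exp (- \<sigma>\<^sup>2 * c1\<^sup>2 / (8 * l\<^sup>2)) * target l (y + a)) * (2 * pi * \<sigma>\<^sup>2) powr (- real CARD('n) / 2)"
      using pi_scaled_le_at_left_tail[OF assms(1)] p_nonneg gauss_dens_le
      by (intro mult_mono) (auto simp: a_def mala_q_def)
    then have "min (target l x * mala_q \<sigma> (target l) x y) (target l y * mala_q \<sigma> (target l) y x)
        \<le> C * target l (y + a)"
      by (simp add: C_def min.coboundedI2 mult_ac)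
    then show ?thesis
      by (rule add_increasing[rotated]) (intro mult_nonneg_nonneg p_nonneg E gauss_dens_nonneg)
  qed
qed

lemma flow_from_probe_box:
  assumes "admissible l" "x \<in> probe_box"
  defines "A \<equiv> 2 powr (real CARD('n) / 2) * exp (- \<sigma>\<^sup>2 * c1\<^sup>2 / (64 * l\<^sup>2))
     + (2 * pi * \<sigma>\<^sup>2) powr (- real CARD('n) / 2) * exp (- \<sigma>\<^sup>2 * c1\<^sup>2 / (8 * l\<^sup>2)) / density_floor l"
  shows "(\<integral>\<^sup>+y. min (target l x * mala_q \<sigma> (target l) x y) (target l y * mala_q \<sigma> (target l) y x) \<partial>lborel)
    \<le> ennreal (target l x * A)"
proof -
  define \<mu> where "\<mu> = x + (\<sigma>\<^sup>2 / 2) *\<^sub>R grad (\<lambda>z. ln (target l z)) x"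
  define E where "E = 2 powr (real CARD('n) / 2) * exp (- \<sigma>\<^sup>2 * c1\<^sup>2 / (64 * l\<^sup>2))"
  define C where "C = (2 * pi * \<sigma>\<^sup>2) powr (- real CARD('n) / 2) * exp (- \<sigma>\<^sup>2 * c1\<^sup>2 / (8 * l\<^sup>2))"
  define a where "a = (drift l / 4) *\<^sub>R axis i1 (1::real)"
  have l: "0 < l" "l * T \<le> 1"
    using assms(1) T by (auto simp: admissible_def)
  have px: "0 < target l x"
    by (rule pi_scaled_pos[OF l(1)])
  have p_nonneg: "0 \<le> target l z" for z
    using pi_scaled_pos[OF l(1)] by (rule less_imp_le)
  have E: "0 \<le> E" and C: "0 \<le> C"
    by (simp_all add: E_def C_def)
  have pointwise: "min (target l x * mala_q \<sigma> (target l) x y) (target l y * mala_q \<sigma> (target l) y x)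
      \<le> target l x * E * gauss_dens (sqrt 2 * \<sigma>) \<mu> y + C * target l (y + a)" for y
    unfolding E_def C_def \<mu>_def a_def by (rule min_flow_le[OF assms(1,2)])
  have "ennreal (min (target l x * mala_q \<sigma> (target l) x y) (target l y * mala_q \<sigma> (target l) y x))
      \<le> ennreal (target l x * E) * ennreal (gauss_dens (sqrt 2 * \<sigma>) \<mu> y) + ennreal C * ennreal (target l (y + a))"
    for y
  proof -
    have "0 \<le> target l x * E"
      using p_nonneg E by simp
    then show ?thesis
      using ennreal_leI[OF pointwise[of y]] p_nonneg C
      by (simp add: ennreal_plus ennreal_mult[symmetric] mult_nonneg_nonneg)
  qed
  then have "(\<integral>\<^sup>+y. min (target l x * mala_q \<sigma> (target l) x y) (target l y * mala_q \<sigma> (target l) y x) \<partial>lborel)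
      \<le> (\<integral>\<^sup>+y. ennreal (target l x * E) * ennreal (gauss_dens (sqrt 2 * \<sigma>) \<mu> y)
        + ennreal C * ennreal (target l (y + a)) \<partial>lborel)"
    by (rule nn_integral_mono)
  also have "\<dots> = ennreal (target l x * E) * (\<integral>\<^sup>+y. gauss_dens (sqrt 2 * \<sigma>) \<mu> y \<partial>lborel)
      + ennreal C * (\<integral>\<^sup>+y. target l (y + a) \<partial>lborel)"
    by (simp add: nn_integral_add nn_integral_cmult)
  also have "\<dots> = ennreal (target l x * E + C)"
    using \<sigma> px E C by (simp add: nn_integral_gauss_dens nn_integral_pi_scaled_translate[OF l(1)] ennreal_plus)
  also have "\<dots> \<le> ennreal (target l x * A)"
  proof (rule ennreal_leI)
    have "C \<le> target l x * (C / density_floor l)"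
      using density_floor_le_pi_scaled[OF l assms(2)] density_floor_pos[OF l(1)] C
      by (simp add: field_simps mult_left_mono)
    then show "target l x * E + C \<le> target l x * A"
      by (simp add: A_def E_def C_def distrib_left)
  qed
  finally show ?thesis .
qed

lemma mh_gap_le_flow_bound:
  assumes "admissible l"
  defines "A \<equiv> 2 powr (real CARD('n) / 2) * exp (- \<sigma>\<^sup>2 * c1\<^sup>2 / (64 * l\<^sup>2))
     + (2 * pi * \<sigma>\<^sup>2) powr (- real CARD('n) / 2) * exp (- \<sigma>\<^sup>2 * c1\<^sup>2 / (8 * l\<^sup>2)) / density_floor l"
  shows "mh_gap (target l) (mala_q \<sigma> (target l)) \<le> ennreal (2 * A)"
proof (rule mh_gap_le_conductance)
  have l: "0 < l"
    using assms(1) by (simp add: admissible_def)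
  show "0 < target l x" for x
    using l by (rule pi_scaled_pos)
  show "target l \<in> borel_measurable lborel"
    by simp
  show "(\<integral>\<^sup>+x. target l x \<partial>lborel) = 1"
    using l by (rule nn_integral_pi_scaled)
  show "0 < mala_q \<sigma> (target l) x y" for x y
    using \<sigma> by (simp add: mala_q_def gauss_dens_pos)
  have "sets (lborel \<Otimes>\<^sub>M lborel) = sets (borel \<Otimes>\<^sub>M borel :: ((real^'n) \<times> (real^'n)) measure)"
    by (rule sets_pair_measure_cong) simp_all
  also have "\<dots> = sets borel"
    by (metis borel_prod)
  finally have "borel_measurable (lborel \<Otimes>\<^sub>M lborel)
      = (borel_measurable borel :: ((real^'n) \<times> (real^'n) \<Rightarrow> real) set)"
    by (rule measurable_cong_sets) (rule refl)
  then show "(\<lambda>z. mala_q \<sigma> (target l) (fst z) (snd z)) \<in> borel_measurable (lborel \<Otimes>\<^sub>M lborel)"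
    using borel_measurable_continuous_onI[OF continuous_on_mala_q[OF l \<sigma>]] by simp
  show "probe_box \<in> sets borel"
    by (rule probe_box_sets)
  show "0 < (\<integral>x. target l x * indicator probe_box x \<partial>lborel)"
    "(\<integral>x. target l x * indicator probe_box x \<partial>lborel) \<le> 1/2"
    using probe_box_mass_pos[OF assms(1)] probe_box_mass_le_half[OF assms(1)] by auto
  show "0 \<le> A"
    using density_floor_pos[OF l] by (simp add: A_def)
  show "(\<integral>\<^sup>+y. min (target l x * mala_q \<sigma> (target l) x y) (target l y * mala_q \<sigma> (target l) y x) \<partial>lborel)
      \<le> target l x * A" if "x \<in> probe_box" for x
    unfolding A_def by (rule flow_from_probe_box[OF assms(1) that])
qed simp

lemma flow_tail_term_le:
  assumes "admissible l"
  defines "a \<equiv> \<sigma>\<^sup>2 * c1\<^sup>2 / 64" and "b \<equiv> c2 * 2 powr (1 + q)"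
  shows "(2 * pi * \<sigma>\<^sup>2) powr (- real CARD('n) / 2) * exp (- \<sigma>\<^sup>2 * c1\<^sup>2 / (8 * l\<^sup>2)) / density_floor l
    \<le> (2 * pi * \<sigma>\<^sup>2) powr (- real CARD('n) / 2) / (\<pi>1 T * m) * exp (- a / l\<^sup>2 + b * l powr (- (1 + q)))"
proof -
  define D where "D = (2 * pi * \<sigma>\<^sup>2) powr (- real CARD('n) / 2) / (\<pi>1 T * m)"
  define L where "L = l powr (- (1 + q))"
  have l: "0 < l" "l \<le> 1"
    using assms(1) by (auto simp: admissible_def)
  have "0 < a"
    using \<sigma> c1 by (simp add: a_def)
  have "(2 / l) powr (1 + q) = 2 powr (1 + q) / l powr (1 + q)"
    by (rule powr_divide)
  also have "\<dots> = 2 powr (1 + q) * L"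
    by (simp add: L_def powr_minus[symmetric] divide_inverse)
  finally have floor: "density_floor l = \<pi>1 T * m * inverse (exp (b * L)) / l"
    by (simp add: density_floor_def b_def exp_minus mult_ac)
  have "\<sigma>\<^sup>2 * c1\<^sup>2 / (8 * l\<^sup>2) = 8 * (a / l\<^sup>2)"
    by (simp add: a_def)
  then have "(2 * pi * \<sigma>\<^sup>2) powr (- real CARD('n) / 2) * exp (- \<sigma>\<^sup>2 * c1\<^sup>2 / (8 * l\<^sup>2)) / density_floor l
      = D * ((l * exp (- (8 * (a / l\<^sup>2)))) * exp (b * L))"
    unfolding floor using l \<pi>1_pos[of T] m by (simp add: D_def field_simps)
  also have "\<dots> \<le> D * (exp (- (a / l\<^sup>2)) * exp (b * L))"
  proof (intro mult_left_mono mult_right_mono)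
    have "l * exp (- (8 * (a / l\<^sup>2))) \<le> 1 * exp (- (8 * (a / l\<^sup>2)))"
      using l by (intro mult_right_mono) auto
    also have "\<dots> \<le> exp (- (a / l\<^sup>2))"
      using \<open>0 < a\<close> l by (simp add: divide_right_mono)
    finally show "l * exp (- (8 * (a / l\<^sup>2))) \<le> exp (- (a / l\<^sup>2))" .
    show "0 \<le> D"
      using \<pi>1_pos[of T] m by (simp add: D_def)
  qed simp
  also have "exp (- (a / l\<^sup>2)) * exp (b * L) = exp (- a / l\<^sup>2 + b * l powr (- (1 + q)))"
    unfolding L_def by (subst exp_add[symmetric]) simp
  finally show ?thesis
    unfolding D_def .
qed

lemma mh_gap_exponential_bound:
  obtains C a b where "0 \<le> C" "0 < a"
    "\<And>l. admissible l \<Longrightarrow>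
      mh_gap (target l) (mala_q \<sigma> (target l)) \<le> ennreal (C * exp (- a / l\<^sup>2 + b * l powr (- (1 + q))))"
proof
  define D where "D = (2 * pi * \<sigma>\<^sup>2) powr (- real CARD('n) / 2) / (\<pi>1 T * m)"
  define a where "a = \<sigma>\<^sup>2 * c1\<^sup>2 / 64"
  define b where "b = c2 * 2 powr (1 + q)"
  define E where "E l = exp (- a / l\<^sup>2 + b * l powr (- (1 + q)))" for l
  show "0 \<le> 2 * (2 powr (real CARD('n) / 2) + D)"
    using \<pi>1_pos[of T] m by (simp add: D_def)
  show "0 < a"
    using \<sigma> c1 by (simp add: a_def)
  fix l
  assume adm: "admissible l"
  have "0 \<le> b * l powr (- (1 + q))"
    using c2_pos by (simp add: b_def)
  then have "2 powr (real CARD('n) / 2) * exp (- \<sigma>\<^sup>2 * c1\<^sup>2 / (64 * l\<^sup>2)) \<le> 2 powr (real CARD('n) / 2) * E l"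
    by (simp add: E_def a_def)
  moreover have "(2 * pi * \<sigma>\<^sup>2) powr (- real CARD('n) / 2) * exp (- \<sigma>\<^sup>2 * c1\<^sup>2 / (8 * l\<^sup>2)) / density_floor l
      \<le> D * E l"
    using flow_tail_term_le[OF adm] by (simp add: D_def E_def a_def b_def)
  ultimately have "2 * (2 powr (real CARD('n) / 2) * exp (- \<sigma>\<^sup>2 * c1\<^sup>2 / (64 * l\<^sup>2))
      + (2 * pi * \<sigma>\<^sup>2) powr (- real CARD('n) / 2) * exp (- \<sigma>\<^sup>2 * c1\<^sup>2 / (8 * l\<^sup>2)) / density_floor l)
      \<le> 2 * (2 powr (real CARD('n) / 2) + D) * E l"
    by (simp only: distrib_right mult.assoc) (intro mult_left_mono add_mono; simp)
  then have "ennreal (2 * (2 powr (real CARD('n) / 2) * exp (- \<sigma>\<^sup>2 * c1\<^sup>2 / (64 * l\<^sup>2))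
      + (2 * pi * \<sigma>\<^sup>2) powr (- real CARD('n) / 2) * exp (- \<sigma>\<^sup>2 * c1\<^sup>2 / (8 * l\<^sup>2)) / density_floor l))
      \<le> ennreal (2 * (2 powr (real CARD('n) / 2) + D) * E l)"
    by (rule ennreal_leI)
  with mh_gap_le_flow_bound[OF adm]
  show "mh_gap (target l) (mala_q \<sigma> (target l))
      \<le> ennreal (2 * (2 powr (real CARD('n) / 2) + D) * exp (- a / l\<^sup>2 + b * l powr (- (1 + q))))"
    unfolding E_def by (rule order.trans)
qed

lemma mh_gap_decay:
  "\<exists>\<gamma>>0. Limsup (at_right 0)
     (\<lambda>l. mh_gap (target l) (mala_q \<sigma> (target l)) * ennreal (exp (\<gamma> * l powr (- (1 + q)) - q * ln l))) < \<infinity>"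
proof -
  obtain C a b where C: "0 \<le> C" and a: "0 < a"
    and gap: "\<And>l. admissible l \<Longrightarrow>
      mh_gap (target l) (mala_q \<sigma> (target l)) \<le> ennreal (C * exp (- a / l\<^sup>2 + b * l powr (- (1 + q))))"
    by (rule mh_gap_exponential_bound) (rule that)
  have "eventually (\<lambda>l. mh_gap (target l) (mala_q \<sigma> (target l))
      * ennreal (exp (1 * l powr (- (1 + q)) - q * ln l)) \<le> ennreal C) (at_right 0)"
    using eventually_admissible eventually_exponent_nonpos_at_right_0[OF a q(2), of "b + 1"]
  proof eventually_elim
    case (elim l)
    then have l: "0 < l" "l \<le> 1"
      by (auto simp: admissible_def)
    have "- q * ln l \<le> - ln l"
      using q l by (simp add: mult_le_cancel_right1)
    also have "\<dots> = ln (1 / l)"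
      using l by (simp add: ln_div)
    also have "\<dots> \<le> 1 / l"
      using l ln_le_minus_one[of "1 / l"] by simp
    finally have "(- a / l\<^sup>2 + b * l powr (- (1 + q))) + (1 * l powr (- (1 + q)) - q * ln l) \<le> 0"
      using elim(2) by (simp add: algebra_simps)
    then have "C * exp (- a / l\<^sup>2 + b * l powr (- (1 + q))) * exp (1 * l powr (- (1 + q)) - q * ln l) \<le> C"
      using C by (simp add: mult.assoc exp_add[symmetric] mult_left_le)
    moreover have "mh_gap (target l) (mala_q \<sigma> (target l)) * ennreal (exp (1 * l powr (- (1 + q)) - q * ln l))
        \<le> ennreal (C * exp (- a / l\<^sup>2 + b * l powr (- (1 + q)))) * ennreal (exp (1 * l powr (- (1 + q)) - q * ln l))"
      using gap[OF elim(1)] by (rule mult_right_mono) simp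
    ultimately show ?case
      using C by (simp add: ennreal_mult''[symmetric] ennreal_leI order.trans)
  qed
  then have "Limsup (at_right 0) (\<lambda>l. mh_gap (target l) (mala_q \<sigma> (target l))
      * ennreal (exp (1 * l powr (- (1 + q)) - q * ln l))) \<le> ennreal C"
    by (rule Limsup_bounded)
  then show ?thesis
    by (intro exI[of _ 1]) (auto simp: le_less_trans[OF _ ennreal_less_top])
qed

end

theorem theorem2p2:
  fixes \<pi> :: "real^'n \<Rightarrow> real" and \<pi>1 :: "real \<Rightarrow> real" and \<pi>2 :: "real^'n \<Rightarrow> real"
    and i1 :: 'n and q \<sigma> :: real
  assumes pos: "\<forall>x. \<pi> x > 0"
    and meas: "\<pi> \<in> borel_measurable lborel"
    and dens: "(\<integral>\<^sup>+ x. ennreal (\<pi> x) \<partial>lborel) = 1"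
    and C1_diff: "\<forall>x. (\<lambda>z. ln (\<pi> z)) differentiable (at x)"
    and C1_cont: "continuous_on UNIV (grad (\<lambda>z. ln (\<pi> z)))"
    and prod: "\<forall>x. \<pi> x = \<pi>1 (x $ i1) * \<pi>2 x"
    and \<pi>2_indep: "\<forall>x t. \<pi>2 (\<chi> i. if i = i1 then t else x $ i) = \<pi>2 x"
    and \<pi>1_nonneg: "\<forall>t. \<pi>1 t \<ge> 0"
    and \<pi>1_meas: "\<pi>1 \<in> borel_measurable lborel"
    and \<pi>1_dens: "(\<integral>\<^sup>+ t. ennreal (\<pi>1 t) \<partial>lborel) = 1"
    and \<pi>2_nonneg: "\<forall>x. \<pi>2 x \<ge> 0"
    and \<pi>2_meas: "\<pi>2 \<in> borel_measurable lborel"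
    and q: "0 \<le> q" "q < 1"
    and theta_lo: "Liminf at_infinity
                     (\<lambda>t::real. ereal (\<bar>deriv (\<lambda>s. ln (\<pi>1 s)) t\<bar> / \<bar>t\<bar> powr q)) > 0"
    and theta_hi: "Limsup at_infinity
                     (\<lambda>t::real. ereal (\<bar>deriv (\<lambda>s. ln (\<pi>1 s)) t\<bar> / \<bar>t\<bar> powr q)) < \<infinity>"
    and \<sigma>: "\<sigma> > 0"
  shows "\<exists>\<gamma>>0. Limsup (at_right 0)
           (\<lambda>l. mh_gap (pi_scaled i1 l \<pi>) (mala_q \<sigma> (pi_scaled i1 l \<pi>))
                 * ennreal (exp (\<gamma> * l powr (- (1 + q)) - q * ln l))) < \<infinity>"
proof -
  interpret product_density \<pi> \<pi>1 \<pi>2 i1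
    using pos meas dens C1_diff C1_cont prod \<pi>2_indep \<pi>1_nonneg \<pi>1_meas \<pi>1_dens \<pi>2_nonneg
    by unfold_locales (simp_all add: vec_upd_def)
  have "Liminf at_infinity (\<lambda>t. ereal (\<bar>score1 t\<bar> / \<bar>t\<bar> powr q)) > 0"
    "Limsup at_infinity (\<lambda>t. ereal (\<bar>score1 t\<bar> / \<bar>t\<bar> powr q)) < \<infinity>"
    using theta_lo theta_hi by (simp_all add: score1_def)
  then obtain T c1 c2 where "1 \<le> T" "0 < c1"
    "\<And>t. T \<le> \<bar>t\<bar> \<Longrightarrow> c1 \<le> \<bar>score1 t\<bar>" "\<And>t. T \<le> \<bar>t\<bar> \<Longrightarrow> \<bar>score1 t\<bar> \<le> c2 * \<bar>t\<bar> powr q"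
    by (rule Theta_powr_bounds_at_infinity[OF q(1)]) (rule that)
  moreover obtain m where "0 < m" "\<And>x. x \<in> probe_box \<Longrightarrow> m \<le> \<pi>2 x"
    by (rule \<pi>2_bounded_below[OF bounded_probe_box]) (rule that)
  ultimately interpret mala_scaling \<pi> \<pi>1 \<pi>2 i1 q \<sigma> T c1 c2 m
    using q \<sigma> by unfold_locales auto
  show ?thesis
    by (rule mh_gap_decay)
qed

end
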